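(* Let $\psi,\varphi\in\mathcal S'(\mathbb R^d)$ with $\varphi$ compactly supported. (i) If $\psi$ is weakly almost periodic then so is $\psi*\varphi$. (ii) If $\psi$ is strongly almost periodic then so is $\psi*\varphi$. (iii) If $\psi$ is null weakly almost periodic then so is $\psi*\varphi$.
   Context: For $\psi\in\mathcal S'$ and $f\in\mathcal S$, $\psi*f(t)=\psi(T_tf_-)$, $f_-(s)=f(-s)$, $T_tf(x)=f(x-t)$. A tempered distribution $\psi$ is weakly / strongly / null weakly almost periodic if $\psi*f$ is a weakly almost periodic / Bohr almost periodic / null weakly almost periodic function for every $f\in\mathcal S$. *)

theory Defs
  imports "HOL-Analysis.Analysis"
begin

text \<open>Ambient space: R^d is modelled by an arbitrary Euclidean space 'a (DIM('a) = d).
  Functions and distributions are complex valued.\<close>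

definition dir_deriv :: "'a::euclidean_space \<Rightarrow> ('a \<Rightarrow> complex) \<Rightarrow> 'a \<Rightarrow> complex" where
  "dir_deriv v f x = vector_derivative (\<lambda>t::real. f (x + t *\<^sub>R v)) (at 0)"

fun iter_deriv :: "'a::euclidean_space list \<Rightarrow> ('a \<Rightarrow> complex) \<Rightarrow> 'a \<Rightarrow> complex" where
  "iter_deriv [] f = f"
| "iter_deriv (v # vs) f = dir_deriv v (iter_deriv vs f)"

definition smooth_fun :: "('a::euclidean_space \<Rightarrow> complex) \<Rightarrow> bool" where
  "smooth_fun f \<longleftrightarrow>
     (\<forall>vs. set vs \<subseteq> Basis \<longrightarrow> continuous_on UNIV (iter_deriv vs f) \<and>
        (\<forall>v\<in>Basis. \<forall>x. (\<lambda>t::real. iter_deriv vs f (x + t *\<^sub>R v)) differentiable (at 0)))"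

definition schwartz :: "('a::euclidean_space \<Rightarrow> complex) \<Rightarrow> bool" where
  "schwartz f \<longleftrightarrow> smooth_fun f \<and>
     (\<forall>vs. set vs \<subseteq> Basis \<longrightarrow> (\<forall>n::nat. \<exists>C. \<forall>x. (1 + norm x) ^ n * norm (iter_deriv vs f x) \<le> C))"

definition schwartz_seminorm :: "nat \<Rightarrow> 'a::euclidean_space list \<Rightarrow> ('a \<Rightarrow> complex) \<Rightarrow> real" where
  "schwartz_seminorm n vs f = (SUP x. (1 + norm x) ^ n * norm (iter_deriv vs f x))"

text \<open>Only its values on Schwartz
  functions are relevant.\<close>
definition tempered :: "(('a::euclidean_space \<Rightarrow> complex) \<Rightarrow> complex) \<Rightarrow> bool" where
  "tempered T \<longleftrightarrow>
     (\<forall>f g. schwartz f \<longrightarrow> schwartz g \<longrightarrow> T (\<lambda>x. f x + g x) = T f + T g) \<and>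
     (\<forall>f c. schwartz f \<longrightarrow> T (\<lambda>x. c * f x) = c * T f) \<and>
     (\<exists>C N. \<forall>f. schwartz f \<longrightarrow>
        norm (T f) \<le> C * (\<Sum>(n, vs) \<in> {..N} \<times> {vs. set vs \<subseteq> Basis \<and> length vs \<le> N}.
                              schwartz_seminorm n vs f))"

definition dist_support :: "(('a::euclidean_space \<Rightarrow> complex) \<Rightarrow> complex) \<Rightarrow> 'a set" where
  "dist_support T = - \<Union>{U. open U \<and>
     (\<forall>f. schwartz f \<and> compact (closure {x. f x \<noteq> 0}) \<and> closure {x. f x \<noteq> 0} \<subseteq> U \<longrightarrow> T f = 0)}"

definition compactly_supported :: "(('a::euclidean_space \<Rightarrow> complex) \<Rightarrow> complex) \<Rightarrow> bool" where
  "compactly_supported T \<longleftrightarrow> compact (dist_support T)"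

definition dconv_fun :: "(('a::euclidean_space \<Rightarrow> complex) \<Rightarrow> complex) \<Rightarrow> ('a \<Rightarrow> complex) \<Rightarrow> 'a \<Rightarrow> complex" where
  "dconv_fun \<psi> f t = \<psi> (\<lambda>x. (\<lambda>s. f (- s)) (x - t))"

definition dconv :: "(('a::euclidean_space \<Rightarrow> complex) \<Rightarrow> complex) \<Rightarrow> (('a \<Rightarrow> complex) \<Rightarrow> complex)
                      \<Rightarrow> ('a \<Rightarrow> complex) \<Rightarrow> complex" where
  "dconv \<psi> \<phi> f = \<psi> (\<lambda>x. \<phi> (\<lambda>y. f (x + y)))"

definition bohr_ap :: "('a::euclidean_space \<Rightarrow> complex) \<Rightarrow> bool" where
  "bohr_ap f \<longleftrightarrow> continuous_on UNIV f \<and>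
     (\<forall>\<epsilon>>0. \<exists>R>0. \<forall>x. \<exists>t\<in>ball x R. \<forall>y. norm (f (y + t) - f y) < \<epsilon>)"

definition weak_topology :: "'v::real_normed_vector topology" where
  "weak_topology = pullback_topology UNIV (\<lambda>x (L::'v \<Rightarrow>\<^sub>L real). blinfun_apply L x) (powertop_real UNIV)"

definition translate_bcf :: "'a::euclidean_space \<Rightarrow> ('a \<Rightarrow> complex) \<Rightarrow> ('a \<Rightarrow>\<^sub>C complex)" where
  "translate_bcf t f = Bcontfun (\<lambda>x. f (x - t))"

definition wap :: "('a::euclidean_space \<Rightarrow> complex) \<Rightarrow> bool" where
  "wap f \<longleftrightarrow> f \<in> bcontfun \<and>
     compactin weak_topology (weak_topology closure_of (range (\<lambda>t. translate_bcf t f)))"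

definition null_wap :: "('a::euclidean_space \<Rightarrow> complex) \<Rightarrow> bool" where
  "null_wap f \<longleftrightarrow> wap f \<and>
     (\<forall>\<epsilon>>0. \<exists>R0. \<forall>R\<ge>R0. \<forall>t.
        integral (cball t R) (\<lambda>x. norm (f x)) / measure lebesgue (cball (0::'a) R) < \<epsilon>)"

definition weakly_ap_dist :: "(('a::euclidean_space \<Rightarrow> complex) \<Rightarrow> complex) \<Rightarrow> bool" where
  "weakly_ap_dist \<psi> \<longleftrightarrow> tempered \<psi> \<and> (\<forall>f. schwartz f \<longrightarrow> wap (dconv_fun \<psi> f))"

definition strongly_ap_dist :: "(('a::euclidean_space \<Rightarrow> complex) \<Rightarrow> complex) \<Rightarrow> bool" where
  "strongly_ap_dist \<psi> \<longleftrightarrow> tempered \<psi> \<and> (\<forall>f. schwartz f \<longrightarrow> bohr_ap (dconv_fun \<psi> f))"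

definition null_weakly_ap_dist :: "(('a::euclidean_space \<Rightarrow> complex) \<Rightarrow> complex) \<Rightarrow> bool" where
  "null_weakly_ap_dist \<psi> \<longleftrightarrow> tempered \<psi> \<and> (\<forall>f. schwartz f \<longrightarrow> null_wap (dconv_fun \<psi> f))"

end

theory Submission
  imports Defs
begin

text \<open>Write S s g for the function x \<mapsto> \<phi>(y \<mapsto> g(x + s y)) (shifted_pairing \<phi> s g below).
  Then \<psi> * \<phi> = \<psi> \<circ> S 1 and (\<psi> * \<phi>) * f = \<psi> * S (-1) f, so everything reduces to
  showing that S s maps Schwartz functions continuously into Schwartz functions when \<phi> has
  compact support. Smoothness holds for every tempered \<phi>: difference quotients and translates
  converge in the Schwartz topology, so derivatives pass through the pairing. Decay uses the support:
  a partition of unity shows \<phi> = \<phi>(\<chi> \<cdot>) for a smooth cutoff \<chi> equal to 1 near the support,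
  so \<phi> only sees a fixed ball, on which the weight (1 + |x|)^n is controlled by the weights of g
  around x.\<close>

abbreviation has_dir_deriv :: "('a::euclidean_space \<Rightarrow> complex) \<Rightarrow> 'a \<Rightarrow> 'a \<Rightarrow> complex \<Rightarrow> bool" where
  "has_dir_deriv f v x d \<equiv> ((\<lambda>t::real. f (x + t *\<^sub>R v)) has_vector_derivative d) (at 0)"

section \<open>Calculus of smooth functions\<close>

lemma iter_deriv_append: "iter_deriv (vs @ ws) f = iter_deriv vs (iter_deriv ws f)"
  by (induction vs) auto

lemma dir_deriv_eqI: "has_dir_deriv f v x d \<Longrightarrow> dir_deriv v f x = d"
  unfolding dir_deriv_def by (rule vector_derivative_at)

lemma smooth_fun_has_dir_deriv:
  assumes "smooth_fun f" "set vs \<subseteq> Basis" "v \<in> Basis"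
  shows "has_dir_deriv (iter_deriv vs f) v x (iter_deriv (v#vs) f x)"
proof -
  have "(\<lambda>t::real. iter_deriv vs f (x + t *\<^sub>R v)) differentiable (at 0)"
    using assms unfolding smooth_fun_def by blast
  then show ?thesis
    by (simp add: dir_deriv_def vector_derivative_works)
qed

lemma smooth_fun_continuous: "smooth_fun f \<Longrightarrow> set vs \<subseteq> Basis \<Longrightarrow> continuous_on UNIV (iter_deriv vs f)"
  unfolding smooth_fun_def by blast

lemma smooth_funI:
  assumes "\<And>vs. set vs \<subseteq> Basis \<Longrightarrow> continuous_on UNIV (iter_deriv vs f)"
    and "\<And>vs v x. set vs \<subseteq> Basis \<Longrightarrow> v \<in> Basis \<Longrightarrow> \<exists>d. has_dir_deriv (iter_deriv vs f) v x d"
  shows "smooth_fun f"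
  unfolding smooth_fun_def
  using assms differentiableI_vector by blast

lemma smooth_fun_iter_deriv: "smooth_fun f \<Longrightarrow> set ws \<subseteq> Basis \<Longrightarrow> smooth_fun (iter_deriv ws f)"
  unfolding smooth_fun_def by (simp add: iter_deriv_append[symmetric])

lemma iter_deriv_lincomb:
  assumes "smooth_fun f" "smooth_fun g" "set vs \<subseteq> Basis"
  shows "iter_deriv vs (\<lambda>x. a * f x + b * g x) = (\<lambda>x. a * iter_deriv vs f x + b * iter_deriv vs g x)"
  using assms(3)
proof (induction vs)
  case Nil
  then show ?case by simp
next
  case (Cons v vs)
  then have v: "v \<in> Basis" and vs: "set vs \<subseteq> Basis" by auto
  show ?case
  proof
    fix x
    have "has_dir_deriv (\<lambda>x. a * iter_deriv vs f x + b * iter_deriv vs g x) v x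
            (a * iter_deriv (v#vs) f x + b * iter_deriv (v#vs) g x)"
      by (intro has_vector_derivative_add has_vector_derivative_mult_right
          smooth_fun_has_dir_deriv assms v vs)
    then show "iter_deriv (v # vs) (\<lambda>x. a * f x + b * g x) x =
         a * iter_deriv (v # vs) f x + b * iter_deriv (v # vs) g x"
      using Cons.IH[OF vs] by (simp add: dir_deriv_eqI)
  qed
qed

lemma smooth_fun_lincomb:
  assumes "smooth_fun f" "smooth_fun g"
  shows "smooth_fun (\<lambda>x. a * f x + b * g x)"
proof (rule smooth_funI)
  fix vs :: "'a list" assume vs: "set vs \<subseteq> Basis"
  show "continuous_on UNIV (iter_deriv vs (\<lambda>x. a * f x + b * g x))"
    unfolding iter_deriv_lincomb[OF assms vs]
    by (intro continuous_intros smooth_fun_continuous assms vs)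
next
  fix vs :: "'a list" and v :: 'a and x assume vs: "set vs \<subseteq> Basis" and v: "v \<in> Basis"
  show "\<exists>d. has_dir_deriv (iter_deriv vs (\<lambda>x. a * f x + b * g x)) v x d"
    unfolding iter_deriv_lincomb[OF assms vs]
    by (intro exI[of _ "a * iter_deriv (v#vs) f x + b * iter_deriv (v#vs) g x"]
        has_vector_derivative_add has_vector_derivative_mult_right smooth_fun_has_dir_deriv assms v vs)
qed

lemma smooth_fun_diff: "smooth_fun f \<Longrightarrow> smooth_fun g \<Longrightarrow> smooth_fun (\<lambda>x. f x - g x)"
  using smooth_fun_lincomb[of f g 1 "-1"] by simp

lemma iter_deriv_diff:
  "smooth_fun f \<Longrightarrow> smooth_fun g \<Longrightarrow> set vs \<subseteq> Basis \<Longrightarrow>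
     iter_deriv vs (\<lambda>x. f x - g x) = (\<lambda>x. iter_deriv vs f x - iter_deriv vs g x)"
  using iter_deriv_lincomb[of f g vs 1 "-1"] by simp

lemma dir_deriv_const: "dir_deriv v (\<lambda>x. c) = (\<lambda>x. 0)"
  by (auto simp: dir_deriv_def intro!: ext vector_derivative_at)

lemma iter_deriv_const: "vs \<noteq> [] \<Longrightarrow> iter_deriv vs (\<lambda>x. c) = (\<lambda>x. 0)"
proof (induction vs)
  case Nil
  then show ?case by simp
next
  case (Cons w vs)
  then show ?case by (cases vs) (auto simp: dir_deriv_const)
qed

lemma iter_deriv_zero: "iter_deriv vs (\<lambda>x. 0) = (\<lambda>x. 0)"
  by (cases "vs = []") (auto simp: iter_deriv_const)

lemma smooth_fun_const: "smooth_fun (\<lambda>x. c)"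
proof (rule smooth_funI)
  fix vs v x
  show "continuous_on UNIV (iter_deriv vs (\<lambda>x. c))"
    by (cases "vs = []") (auto simp: iter_deriv_const)
  show "\<exists>d. has_dir_deriv (iter_deriv vs (\<lambda>x. c)) v x d"
    by (cases "vs = []") (auto simp: iter_deriv_const intro!: exI[of _ 0])
qed

lemma iter_deriv_local:
  assumes "open W" "\<And>x. x \<in> W \<Longrightarrow> f x = g x" "x \<in> W"
  shows "iter_deriv vs f x = iter_deriv vs g x"
  using assms(3)
proof (induction vs arbitrary: x)
  case Nil
  then show ?case using assms by simp
next
  case (Cons v vs)
  have "open ((\<lambda>t::real. x + t *\<^sub>R v) -` W)"
    by (intro open_vimage assms continuous_intros)
  then have "eventually (\<lambda>t::real. t \<in> UNIV \<longrightarrow> iter_deriv vs f (x + t *\<^sub>R v) = iter_deriv vs g (x + t *\<^sub>R v)) (nhds 0)"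
    using Cons by (auto simp: eventually_nhds intro!: exI[of _ "(\<lambda>t::real. x + t *\<^sub>R v) -` W"])
  then show ?case
    by (simp add: dir_deriv_def vector_derivative_cong_eq)
qed

lemma iter_deriv_eq_0_outside:
  assumes "closed C" "\<And>x. x \<notin> C \<Longrightarrow> f x = 0" "x \<notin> C"
  shows "iter_deriv vs f x = 0"
  using iter_deriv_local[of "- C" f "\<lambda>x. 0" x vs] assms by (auto simp: iter_deriv_zero)

lemma iter_deriv_translate: "iter_deriv vs (\<lambda>y. f (a + y)) = (\<lambda>y. iter_deriv vs f (a + y))"
  by (induction vs) (simp_all add: dir_deriv_def add.assoc)

lemma has_dir_deriv_affine:
  assumes f: "smooth_fun f" and vs: "set vs \<subseteq> Basis" and v: "v \<in> Basis"
  shows "has_dir_deriv (\<lambda>y. iter_deriv vs f (a + s *\<^sub>R y)) v y (s *\<^sub>R iter_deriv (v#vs) f (a + s *\<^sub>R y))"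
proof -
  have "((\<lambda>t. iter_deriv vs f ((a + s *\<^sub>R y) + t *\<^sub>R v)) \<circ> (\<lambda>t. s * t) has_vector_derivative
         s *\<^sub>R iter_deriv (v#vs) f (a + s *\<^sub>R y)) (at 0)"
    using smooth_fun_has_dir_deriv[OF f vs v]
    by (intro vector_diff_chain_at)
       (simp_all add: has_real_derivative_iff_has_vector_derivative[symmetric] DERIV_cmult_Id)
  then show ?thesis by (simp add: o_def algebra_simps)
qed

lemma iter_deriv_affine:
  assumes f: "smooth_fun f" and "set vs \<subseteq> Basis"
  shows "iter_deriv vs (\<lambda>y. f (a + s *\<^sub>R y)) = (\<lambda>y. (s ^ length vs) *\<^sub>R iter_deriv vs f (a + s *\<^sub>R y))"
  using assms(2)
proof (induction vs)
  case Nil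
  then show ?case by simp
next
  case (Cons v vs)
  then have v: "v \<in> Basis" and vs: "set vs \<subseteq> Basis" by auto
  show ?case
  proof
    fix y
    have "has_dir_deriv (\<lambda>y. (s ^ length vs) *\<^sub>R iter_deriv vs f (a + s *\<^sub>R y)) v y
          ((s ^ length vs) *\<^sub>R (s *\<^sub>R iter_deriv (v#vs) f (a + s *\<^sub>R y)))"
      by (intro bounded_linear.has_vector_derivative[OF bounded_linear_scaleR_right]
          has_dir_deriv_affine f vs v)
    then show "iter_deriv (v # vs) (\<lambda>y. f (a + s *\<^sub>R y)) y =
         (s ^ length (v # vs)) *\<^sub>R iter_deriv (v # vs) f (a + s *\<^sub>R y)"
      using Cons.IH[OF vs] by (simp add: dir_deriv_eqI)
  qed
qed

lemma smooth_fun_affine: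
  assumes f: "smooth_fun f"
  shows "smooth_fun (\<lambda>y. f (a + s *\<^sub>R y))"
proof (rule smooth_funI)
  fix vs :: "'a list" assume vs: "set vs \<subseteq> Basis"
  have "continuous_on UNIV (\<lambda>y. (s ^ length vs) *\<^sub>R iter_deriv vs f (a + s *\<^sub>R y))"
    by (intro continuous_intros continuous_on_compose2[OF smooth_fun_continuous[OF f vs]]) auto
  then show "continuous_on UNIV (iter_deriv vs (\<lambda>y. f (a + s *\<^sub>R y)))"
    by (simp add: iter_deriv_affine[OF f vs])
next
  fix vs :: "'a list" and v :: 'a and x assume vs: "set vs \<subseteq> Basis" and v: "v \<in> Basis"
  have "has_dir_deriv (\<lambda>y. (s ^ length vs) *\<^sub>R iter_deriv vs f (a + s *\<^sub>R y)) v x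
         ((s ^ length vs) *\<^sub>R (s *\<^sub>R iter_deriv (v#vs) f (a + s *\<^sub>R x)))"
    by (intro bounded_linear.has_vector_derivative[OF bounded_linear_scaleR_right]
        has_dir_deriv_affine f vs v)
  then show "\<exists>d. has_dir_deriv (iter_deriv vs (\<lambda>y. f (a + s *\<^sub>R y))) v x d"
    by (auto simp: iter_deriv_affine[OF f vs])
qed

lemma smooth_fun_translate: "smooth_fun f \<Longrightarrow> smooth_fun (\<lambda>y. f (a + y))"
  using smooth_fun_affine[of f a 1] by simp

lemma has_dir_deriv_imp_line_deriv:
  assumes "has_dir_deriv f v (z + r *\<^sub>R v) d"
  shows "((\<lambda>s. f (z + s *\<^sub>R v)) has_vector_derivative d) (at r)"
proof -
  have "((\<lambda>t. f ((z + r *\<^sub>R v) + t *\<^sub>R v)) \<circ> (\<lambda>s. s - r) has_vector_derivative 1 *\<^sub>R d) (at r)"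
    using assms by (intro vector_diff_chain_at) (auto intro!: derivative_eq_intros)
  moreover have "(\<lambda>t. f ((z + r *\<^sub>R v) + t *\<^sub>R v)) \<circ> (\<lambda>s. s - r) = (\<lambda>s. f (z + s *\<^sub>R v))"
    by (auto simp: o_def algebra_simps)
  ultimately show ?thesis by simp
qed

lemma smooth_fun_line_deriv:
  assumes "smooth_fun f" "set vs \<subseteq> Basis" "v \<in> Basis"
  shows "((\<lambda>s. iter_deriv vs f (z + s *\<^sub>R v)) has_vector_derivative iter_deriv (v#vs) f (z + r *\<^sub>R v)) (at r)"
  by (rule has_dir_deriv_imp_line_deriv, rule smooth_fun_has_dir_deriv[OF assms])

lemma smooth_fun_line_integral:
  assumes "smooth_fun f" "set vs \<subseteq> Basis" "v \<in> Basis" "p \<le> q"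
  shows "iter_deriv vs f (z + q *\<^sub>R v) - iter_deriv vs f (z + p *\<^sub>R v) =
         integral {p..q} (\<lambda>r. iter_deriv (v#vs) f (z + r *\<^sub>R v))"
proof -
  have "((\<lambda>r. iter_deriv (v#vs) f (z + r *\<^sub>R v)) has_integral
          (iter_deriv vs f (z + q *\<^sub>R v) - iter_deriv vs f (z + p *\<^sub>R v))) {p..q}"
    using smooth_fun_line_deriv[OF assms(1-3)] has_vector_derivative_at_within
    by (intro fundamental_theorem_of_calculus[OF assms(4)]) blast
  then show ?thesis by (simp add: integral_unique)
qed

lemma dir_deriv_line_increment:
  assumes u: "smooth_fun u" and a: "a \<in> Basis" and b: "b \<in> Basis" and pt: "p \<le> t"
  shows "iter_deriv [b] u (x + t *\<^sub>R a) - iter_deriv [b] u (x + p *\<^sub>R a) =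
         integral {p..t} (\<lambda>r. iter_deriv [b,a] u (x + r *\<^sub>R a))"
proof -
  let ?ub = "iter_deriv [b] u" and ?ua = "iter_deriv [a] u" and ?uab = "iter_deriv [b,a] u"
  define G where "G = (\<lambda>h. u (x + t *\<^sub>R a + h *\<^sub>R b) - u (x + p *\<^sub>R a + h *\<^sub>R b))"
  define F where "F = (\<lambda>h. integral (cbox p t) (\<lambda>r. ?ua (x + h *\<^sub>R b + r *\<^sub>R a)))"
  have FG: "F = G"
  proof
    fix h
    have "u ((x + h *\<^sub>R b) + t *\<^sub>R a) - u ((x + h *\<^sub>R b) + p *\<^sub>R a) =
          integral {p..t} (\<lambda>r. ?ua ((x + h *\<^sub>R b) + r *\<^sub>R a))"
      using smooth_fun_line_integral[OF u, of "[]" a p t "x + h *\<^sub>R b"] a pt by simp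
    then show "F h = G h" unfolding F_def G_def by (simp add: algebra_simps)
  qed
  have dG: "(G has_vector_derivative (?ub (x + t *\<^sub>R a) - ?ub (x + p *\<^sub>R a))) (at 0)"
    unfolding G_def using smooth_fun_has_dir_deriv[OF u, of "[]" b] b
    by (intro has_vector_derivative_diff) auto
  have dF: "(F has_vector_derivative integral (cbox p t) (\<lambda>r. ?uab (x + 0 *\<^sub>R b + r *\<^sub>R a))) (at 0 within UNIV)"
    unfolding F_def
  proof (rule leibniz_rule_vector_derivative[where fx="\<lambda>h r. ?uab (x + h *\<^sub>R b + r *\<^sub>R a)"])
    fix h r :: real
    have "((\<lambda>s. ?ua ((x + r *\<^sub>R a) + s *\<^sub>R b)) has_vector_derivative ?uab ((x + r *\<^sub>R a) + h *\<^sub>R b)) (at h)"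
      using smooth_fun_line_deriv[OF u, of "[a]" b "x + r *\<^sub>R a" h] a b by simp
    then show "((\<lambda>h. ?ua (x + h *\<^sub>R b + r *\<^sub>R a)) has_vector_derivative ?uab (x + h *\<^sub>R b + r *\<^sub>R a)) (at h within UNIV)"
      by (simp add: algebra_simps)
  next
    fix h :: real
    have "continuous_on (cbox p t) (\<lambda>r. ?ua (x + h *\<^sub>R b + r *\<^sub>R a))"
      by (rule continuous_on_compose2[OF smooth_fun_continuous[OF u, of "[a]"]])
         (use a in \<open>auto intro!: continuous_intros\<close>)
    then show "(\<lambda>r. ?ua (x + h *\<^sub>R b + r *\<^sub>R a)) integrable_on cbox p t"
      by (rule integrable_continuous)
  next
    show "continuous_on (UNIV \<times> cbox p t) (\<lambda>(h, r). ?uab (x + h *\<^sub>R b + r *\<^sub>R a))"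
      unfolding case_prod_beta
      by (rule continuous_on_compose2[OF smooth_fun_continuous[OF u, of "[b,a]"]])
         (use a b in \<open>auto intro!: continuous_intros\<close>)
  qed simp_all
  show ?thesis
    using vector_derivative_unique_at[OF dG] dF FG by simp
qed

lemma iter_deriv_swap:
  assumes u: "smooth_fun u" and a: "a \<in> Basis" and b: "b \<in> Basis"
  shows "iter_deriv [a, b] u = iter_deriv [b, a] u"
proof
  fix x
  let ?ub = "iter_deriv [b] u" and ?uab = "iter_deriv [b,a] u"
  have "continuous_on {-1..1} (\<lambda>r. ?uab (x + r *\<^sub>R a))"
    by (rule continuous_on_compose2[OF smooth_fun_continuous[OF u, of "[b,a]"]])
       (use a b in \<open>auto intro!: continuous_intros\<close>)
  then have "((\<lambda>t. integral {-1..t} (\<lambda>r. ?uab (x + r *\<^sub>R a))) has_vector_derivative ?uab (x + 0 *\<^sub>R a))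
      (at 0 within {-1..1})"
    by (rule integral_has_vector_derivative) auto
  then have "((\<lambda>t. integral {-1..t} (\<lambda>r. ?uab (x + r *\<^sub>R a))) has_vector_derivative ?uab x) (at 0)"
    using at_within_interior[of 0 "{-1..1::real}"] by simp
  then have d: "((\<lambda>t. ?ub (x + (-1) *\<^sub>R a) + integral {-1..t} (\<lambda>r. ?uab (x + r *\<^sub>R a)))
              has_vector_derivative ?uab x) (at 0)"
    using has_vector_derivative_add[OF has_vector_derivative_const] by fastforce
  have "?ub (x + (-1) *\<^sub>R a) + integral {-1..t} (\<lambda>r. ?uab (x + r *\<^sub>R a)) = ?ub (x + t *\<^sub>R a)"
    if "t \<in> {-1<..<1::real}" for t
    using dir_deriv_line_increment[OF u a b, of "-1" t x] that by (simp add: algebra_simps)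
  then have "has_dir_deriv ?ub a x (?uab x)"
    by (intro has_vector_derivative_transform_within_open[OF d, where S="{-1<..<1}"]) simp_all
  then show "iter_deriv [a, b] u x = iter_deriv [b, a] u x"
    by (simp add: dir_deriv_eqI)
qed

lemma iter_deriv_snoc:
  assumes "smooth_fun g" "set vs \<subseteq> Basis" "v \<in> Basis"
  shows "iter_deriv (vs @ [v]) g = iter_deriv (v # vs) g"
  using assms(2)
proof (induction vs)
  case Nil
  then show ?case by simp
next
  case (Cons w vs)
  then have w: "w \<in> Basis" and vs: "set vs \<subseteq> Basis" by auto
  have "iter_deriv ((w # vs) @ [v]) g = iter_deriv [w, v] (iter_deriv vs g)"
    using Cons.IH[OF vs] by simp
  also have "\<dots> = iter_deriv [v, w] (iter_deriv vs g)"
    by (rule iter_deriv_swap[OF smooth_fun_iter_deriv[OF assms(1) vs] w assms(3)])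
  finally show ?case by simp
qed

fun leibniz_split :: "'a list \<Rightarrow> ('a list \<times> 'a list) list" where
  "leibniz_split [] = [([], [])]"
| "leibniz_split (v # vs) = concat (map (\<lambda>(a, b). [(v # a, b), (a, v # b)]) (leibniz_split vs))"

lemma leibniz_split_subset:
  "p \<in> set (leibniz_split vs) \<Longrightarrow>
     set (fst p) \<subseteq> set vs \<and> set (snd p) \<subseteq> set vs \<and> length (snd p) \<le> length vs"
  by (induction vs arbitrary: p) fastforce+

lemma leibniz_split_Basis:
  "set vs \<subseteq> Basis \<Longrightarrow> p \<in> set (leibniz_split vs) \<Longrightarrow> set (fst p) \<subseteq> Basis \<and> set (snd p) \<subseteq> Basis"
  using leibniz_split_subset by blast

lemma sum_list_leibniz_split_Cons:
  "(\<Sum>p\<leftarrow>leibniz_split (v # vs). F p) = (\<Sum>p\<leftarrow>leibniz_split vs. F (v # fst p, snd p) + F (fst p, v # snd p))"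
proof -
  have "(\<Sum>p\<leftarrow>concat (map (\<lambda>(a, b). [(v # a, b), (a, v # b)]) L). F p) =
        (\<Sum>p\<leftarrow>L. F (v # fst p, snd p) + F (fst p, v # snd p))" for L
    by (induction L) auto
  then show ?thesis by simp
qed

lemma has_dir_deriv_sum_list:
  assumes "\<And>p. p \<in> set ps \<Longrightarrow> has_dir_deriv (F p) v x (D p)"
  shows "has_dir_deriv (\<lambda>y. \<Sum>p\<leftarrow>ps. F p y) v x (\<Sum>p\<leftarrow>ps. D p)"
  using assms by (induction ps) (auto intro: has_vector_derivative_add)

lemma has_dir_deriv_leibniz_sum:
  assumes c: "smooth_fun c" and h: "smooth_fun h" and vs: "set vs \<subseteq> Basis" and v: "v \<in> Basis"
  shows "has_dir_deriv (\<lambda>y. \<Sum>p\<leftarrow>leibniz_split vs. iter_deriv (fst p) c y * iter_deriv (snd p) h y) v x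
           (\<Sum>p\<leftarrow>leibniz_split (v # vs). iter_deriv (fst p) c x * iter_deriv (snd p) h x)"
  unfolding sum_list_leibniz_split_Cons
proof (rule has_dir_deriv_sum_list)
  fix p assume "p \<in> set (leibniz_split vs)"
  then have a: "set (fst p) \<subseteq> Basis" and b: "set (snd p) \<subseteq> Basis"
    using leibniz_split_Basis vs by blast+
  show "has_dir_deriv (\<lambda>y. iter_deriv (fst p) c y * iter_deriv (snd p) h y) v x
     (iter_deriv (fst (v # fst p, snd p)) c x * iter_deriv (snd (v # fst p, snd p)) h x +
      iter_deriv (fst (fst p, v # snd p)) c x * iter_deriv (snd (fst p, v # snd p)) h x)"
    using has_vector_derivative_mult[OF smooth_fun_has_dir_deriv[OF c a v] smooth_fun_has_dir_deriv[OF h b v]]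
    by (simp add: add.commute)
qed

lemma iter_deriv_mult:
  assumes c: "smooth_fun c" and h: "smooth_fun h" and vs: "set vs \<subseteq> Basis"
  shows "iter_deriv vs (\<lambda>x. c x * h x) =
           (\<lambda>x. \<Sum>p\<leftarrow>leibniz_split vs. iter_deriv (fst p) c x * iter_deriv (snd p) h x)"
  using vs
proof (induction vs)
  case Nil
  then show ?case by simp
next
  case (Cons v vs)
  then show ?case
    using dir_deriv_eqI[OF has_dir_deriv_leibniz_sum[OF c h]]
    by (simp del: leibniz_split.simps)
qed

lemma continuous_on_sum_list:
  "(\<And>p. p \<in> set ps \<Longrightarrow> continuous_on S (F p)) \<Longrightarrow> continuous_on S (\<lambda>x. \<Sum>p\<leftarrow>ps. F p x :: 'b::real_normed_vector)"
  by (induction ps) (auto intro!: continuous_intros)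

lemma smooth_fun_mult:
  assumes c: "smooth_fun c" and h: "smooth_fun h"
  shows "smooth_fun (\<lambda>x. c x * h x)"
proof (rule smooth_funI)
  fix vs :: "'a list" assume vs: "set vs \<subseteq> Basis"
  show "continuous_on UNIV (iter_deriv vs (\<lambda>x. c x * h x))"
    unfolding iter_deriv_mult[OF c h vs] using leibniz_split_Basis[OF vs]
    by (intro continuous_on_sum_list continuous_intros smooth_fun_continuous[OF c]
        smooth_fun_continuous[OF h]) blast+
next
  fix vs :: "'a list" and v :: 'a and x assume vs: "set vs \<subseteq> Basis" and v: "v \<in> Basis"
  show "\<exists>d. has_dir_deriv (iter_deriv vs (\<lambda>x. c x * h x)) v x d"
    unfolding iter_deriv_mult[OF c h vs] using has_dir_deriv_leibniz_sum[OF c h vs v] by blast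
qed

section \<open>Schwartz functions and their seminorms\<close>

lemma schwartz_imp_smooth_fun: "schwartz f \<Longrightarrow> smooth_fun f"
  by (simp add: schwartz_def)

lemma schwartz_weighted_bound:
  "schwartz f \<Longrightarrow> set vs \<subseteq> Basis \<Longrightarrow> \<exists>C. \<forall>x. (1 + norm x) ^ n * norm (iter_deriv vs f x) \<le> C"
  by (simp add: schwartz_def)

lemma schwartz_iter_deriv: "schwartz f \<Longrightarrow> set ws \<subseteq> Basis \<Longrightarrow> schwartz (iter_deriv ws f)"
  unfolding schwartz_def using smooth_fun_iter_deriv[of f ws] by (simp add: iter_deriv_append[symmetric])

lemma schwartz_zero: "schwartz (\<lambda>x. 0)"
  unfolding schwartz_def by (auto simp: smooth_fun_const iter_deriv_zero)

lemma schwartz_seminorm_upper: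
  assumes "schwartz f" "set vs \<subseteq> Basis"
  shows "(1 + norm x) ^ n * norm (iter_deriv vs f x) \<le> schwartz_seminorm n vs f"
proof -
  have "bdd_above (range (\<lambda>x. (1 + norm x) ^ n * norm (iter_deriv vs f x)))"
    using schwartz_weighted_bound[OF assms] by (auto simp: bdd_above_def)
  then show ?thesis
    unfolding schwartz_seminorm_def by (rule cSUP_upper[OF UNIV_I])
qed

lemma schwartz_seminorm_least:
  "(\<And>x. (1 + norm x) ^ n * norm (iter_deriv vs f x) \<le> B) \<Longrightarrow> schwartz_seminorm n vs f \<le> B"
  unfolding schwartz_seminorm_def by (rule cSUP_least) auto

lemma schwartz_seminorm_nonneg: "schwartz f \<Longrightarrow> set vs \<subseteq> Basis \<Longrightarrow> 0 \<le> schwartz_seminorm n vs f"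
  by (rule order_trans[OF _ schwartz_seminorm_upper[of f vs 0 n]]) auto

lemma schwartz_lincomb:
  assumes f: "schwartz f" and g: "schwartz g"
  shows "schwartz (\<lambda>x. a * f x + b * g x)"
  unfolding schwartz_def
proof (intro conjI allI impI)
  show "smooth_fun (\<lambda>x. a * f x + b * g x)"
    using smooth_fun_lincomb schwartz_imp_smooth_fun f g by blast
  fix vs :: "'a list" and n :: nat assume vs: "set vs \<subseteq> Basis"
  let ?w = "\<lambda>x. (1 + norm x) ^ n"
  have "?w x * norm (iter_deriv vs (\<lambda>x. a * f x + b * g x) x)
        \<le> norm a * schwartz_seminorm n vs f + norm b * schwartz_seminorm n vs g" for x
  proof -
    have "?w x * norm (iter_deriv vs (\<lambda>x. a * f x + b * g x) x)
          \<le> ?w x * (norm a * norm (iter_deriv vs f x) + norm b * norm (iter_deriv vs g x))"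
      using iter_deriv_lincomb[OF schwartz_imp_smooth_fun[OF f] schwartz_imp_smooth_fun[OF g] vs]
      by (auto intro!: mult_left_mono norm_triangle_le simp: norm_mult)
    also have "\<dots> = norm a * (?w x * norm (iter_deriv vs f x)) + norm b * (?w x * norm (iter_deriv vs g x))"
      by (simp add: algebra_simps)
    also have "\<dots> \<le> norm a * schwartz_seminorm n vs f + norm b * schwartz_seminorm n vs g"
      by (intro add_mono mult_left_mono schwartz_seminorm_upper f g vs) auto
    finally show ?thesis .
  qed
  then show "\<exists>C. \<forall>x. ?w x * norm (iter_deriv vs (\<lambda>x. a * f x + b * g x) x) \<le> C"
    by blast
qed

lemma schwartz_diff: "schwartz f \<Longrightarrow> schwartz g \<Longrightarrow> schwartz (\<lambda>x. f x - g x)"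
  using schwartz_lincomb[of f g 1 "-1"] by simp

lemma schwartz_cmult: "schwartz f \<Longrightarrow> schwartz (\<lambda>x. c * f x)"
  using schwartz_lincomb[of f f c 0] by simp

lemma weight_translate_le: "1 + norm (y::'a::real_normed_vector) \<le> (1 + norm (a + y)) * (1 + norm a)"
proof -
  have "norm y \<le> norm (a + y) + norm a" using norm_triangle_ineq4[of "a + y" a] by simp
  then show ?thesis by (simp add: algebra_simps) (smt (verit) norm_ge_zero mult_nonneg_nonneg)
qed

lemma weight_translate_power_le:
  "(1 + norm (y::'a::real_normed_vector)) ^ n \<le> (1 + norm (a + y)) ^ n * (1 + norm a) ^ n"
  by (metis power_mono power_mult_distrib weight_translate_le norm_ge_zero add_nonneg_nonneg zero_le_one)

lemma weighted_iter_deriv_affine_le: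
  assumes f: "schwartz f" and s: "\<bar>s\<bar> = 1" and vs: "set vs \<subseteq> Basis"
  shows "(1 + norm y) ^ n * norm (iter_deriv vs (\<lambda>y. f (a + s *\<^sub>R y)) y)
           \<le> (1 + norm a) ^ n * schwartz_seminorm n vs f"
proof -
  have "(1 + norm y) ^ n * norm (iter_deriv vs (\<lambda>y. f (a + s *\<^sub>R y)) y)
      = (1 + norm (s *\<^sub>R y)) ^ n * norm (iter_deriv vs f (a + s *\<^sub>R y))"
    using s by (simp add: iter_deriv_affine[OF schwartz_imp_smooth_fun[OF f] vs] power_abs)
  also have "\<dots> \<le> ((1 + norm (a + s *\<^sub>R y)) ^ n * (1 + norm a) ^ n) * norm (iter_deriv vs f (a + s *\<^sub>R y))"
    by (intro mult_right_mono weight_translate_power_le) auto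
  also have "\<dots> = (1 + norm a) ^ n * ((1 + norm (a + s *\<^sub>R y)) ^ n * norm (iter_deriv vs f (a + s *\<^sub>R y)))"
    by (simp add: algebra_simps)
  also have "\<dots> \<le> (1 + norm a) ^ n * schwartz_seminorm n vs f"
    by (intro mult_left_mono schwartz_seminorm_upper f vs) auto
  finally show ?thesis .
qed

lemma schwartz_affine:
  assumes f: "schwartz f" and s: "\<bar>s\<bar> = 1"
  shows "schwartz (\<lambda>y. f (a + s *\<^sub>R y))"
  unfolding schwartz_def
  using smooth_fun_affine[OF schwartz_imp_smooth_fun[OF f]] weighted_iter_deriv_affine_le[OF f s]
  by blast

lemma schwartz_translate: "schwartz f \<Longrightarrow> schwartz (\<lambda>y. f (a + y))"
  using schwartz_affine[of f 1 a] by simp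

definition seminorm_index :: "nat \<Rightarrow> (nat \<times> 'a::euclidean_space list) set" where
  "seminorm_index N = {..N} \<times> {vs. set vs \<subseteq> Basis \<and> length vs \<le> N}"

definition seminorm_sum :: "nat \<Rightarrow> ('a::euclidean_space \<Rightarrow> complex) \<Rightarrow> real" where
  "seminorm_sum N f = (\<Sum>(n, vs) \<in> seminorm_index N. schwartz_seminorm n vs f)"

lemma finite_seminorm_index: "finite (seminorm_index N)"
  unfolding seminorm_index_def by (intro finite_cartesian_product finite_lists_length_le) auto

lemma seminorm_indexD: "q \<in> seminorm_index N \<Longrightarrow> set (snd q) \<subseteq> Basis \<and> length (snd q) \<le> N \<and> fst q \<le> N"
  by (cases q) (auto simp: seminorm_index_def)

lemma seminorm_sum_eq: "seminorm_sum N f = (\<Sum>q\<in>seminorm_index N. schwartz_seminorm (fst q) (snd q) f)"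
  unfolding seminorm_sum_def by (simp add: case_prod_beta)

lemma seminorm_sum_nonneg: "schwartz f \<Longrightarrow> 0 \<le> seminorm_sum N f"
  unfolding seminorm_sum_eq by (intro sum_nonneg) (auto dest: seminorm_indexD intro: schwartz_seminorm_nonneg)

lemma seminorm_sum_mono: "schwartz f \<Longrightarrow> N \<le> M \<Longrightarrow> seminorm_sum N f \<le> seminorm_sum M f"
  unfolding seminorm_sum_eq
  by (rule sum_mono2[OF finite_seminorm_index])
     (auto simp: seminorm_index_def intro: schwartz_seminorm_nonneg)

lemma schwartz_seminorm_le_seminorm_sum:
  assumes "schwartz f" "set vs \<subseteq> Basis" "n \<le> N" "length vs \<le> N"
  shows "schwartz_seminorm n vs f \<le> seminorm_sum N f"
proof -
  have "schwartz_seminorm (fst (n, vs)) (snd (n, vs)) f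
          \<le> (\<Sum>q\<in>seminorm_index N. schwartz_seminorm (fst q) (snd q) f)"
    using assms
    by (intro member_le_sum finite_seminorm_index)
       (auto simp: seminorm_index_def intro: schwartz_seminorm_nonneg)
  then show ?thesis by (simp add: seminorm_sum_eq)
qed

lemma seminorm_sum_iter_deriv_le:
  fixes g :: "'a::euclidean_space \<Rightarrow> complex"
  assumes g: "schwartz g" and ws: "set ws \<subseteq> Basis"
  shows "seminorm_sum M (iter_deriv ws g)
           \<le> real (card (seminorm_index M :: (nat \<times> 'a list) set)) * seminorm_sum (M + length ws) g"
proof -
  have "seminorm_sum M (iter_deriv ws g) =
          (\<Sum>q\<in>(seminorm_index M :: (nat \<times> 'a list) set). schwartz_seminorm (fst q) (snd q @ ws) g)"
    unfolding seminorm_sum_eq schwartz_seminorm_def by (simp add: iter_deriv_append)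
  also have "\<dots> \<le> (\<Sum>q\<in>(seminorm_index M :: (nat \<times> 'a list) set). seminorm_sum (M + length ws) g)"
    using ws by (intro sum_mono schwartz_seminorm_le_seminorm_sum[OF g]) (auto dest: seminorm_indexD)
  finally show ?thesis by simp
qed

definition bounded_smooth :: "('a::euclidean_space \<Rightarrow> complex) \<Rightarrow> bool" where
  "bounded_smooth c \<longleftrightarrow> smooth_fun c \<and> (\<forall>vs. set vs \<subseteq> Basis \<longrightarrow> (\<exists>B. \<forall>x. norm (iter_deriv vs c x) \<le> B))"

definition deriv_bound :: "('a::euclidean_space \<Rightarrow> complex) \<Rightarrow> 'a list \<Rightarrow> real" where
  "deriv_bound c vs = (SOME B. \<forall>x. norm (iter_deriv vs c x) \<le> B)"

lemma bounded_smooth_imp_smooth_fun: "bounded_smooth c \<Longrightarrow> smooth_fun c"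
  by (simp add: bounded_smooth_def)

lemma norm_iter_deriv_le_deriv_bound:
  assumes "bounded_smooth c" "set vs \<subseteq> Basis"
  shows "norm (iter_deriv vs c x) \<le> deriv_bound c vs"
proof -
  obtain B where "\<forall>x. norm (iter_deriv vs c x) \<le> B" using assms unfolding bounded_smooth_def by blast
  then have "\<forall>x. norm (iter_deriv vs c x) \<le> deriv_bound c vs"
    unfolding deriv_bound_def by (rule someI)
  then show ?thesis by blast
qed

lemma deriv_bound_nonneg: "bounded_smooth c \<Longrightarrow> set vs \<subseteq> Basis \<Longrightarrow> 0 \<le> deriv_bound c vs"
  using norm_iter_deriv_le_deriv_bound[of c vs 0] norm_ge_zero order_trans by blast

lemma bounded_smooth_lincomb:
  assumes c: "bounded_smooth c" and d: "bounded_smooth d"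
  shows "bounded_smooth (\<lambda>x. a * c x + b * d x)"
  unfolding bounded_smooth_def
proof (intro conjI allI impI)
  have sc: "smooth_fun c" and sd: "smooth_fun d" using c d by (auto simp: bounded_smooth_def)
  show "smooth_fun (\<lambda>x. a * c x + b * d x)" by (rule smooth_fun_lincomb[OF sc sd])
  fix vs :: "'a list" assume vs: "set vs \<subseteq> Basis"
  have "norm (iter_deriv vs (\<lambda>x. a * c x + b * d x) x)
          \<le> norm a * deriv_bound c vs + norm b * deriv_bound d vs" for x
    unfolding iter_deriv_lincomb[OF sc sd vs]
    by (rule order_trans[OF norm_triangle_ineq])
       (auto simp: norm_mult intro!: add_mono mult_left_mono norm_iter_deriv_le_deriv_bound c d vs)
  then show "\<exists>B. \<forall>x. norm (iter_deriv vs (\<lambda>x. a * c x + b * d x) x) \<le> B" by blast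
qed

lemma bounded_smooth_const: "bounded_smooth (\<lambda>x. c)"
  unfolding bounded_smooth_def
proof (intro conjI allI impI smooth_fun_const)
  fix vs :: "'a list"
  show "\<exists>B. \<forall>x. norm (iter_deriv vs (\<lambda>x. c) x) \<le> B"
    by (cases "vs = []") (auto simp: iter_deriv_const)
qed

lemma bounded_smooth_one_minus: "bounded_smooth c \<Longrightarrow> bounded_smooth (\<lambda>x. 1 - c x)"
  using bounded_smooth_lincomb[OF bounded_smooth_const, of c 1 1 "-1"] by simp

lemma norm_iter_deriv_affine_le:
  assumes c: "bounded_smooth c" and s: "\<bar>s\<bar> \<le> 1" and vs: "set vs \<subseteq> Basis"
  shows "norm (iter_deriv vs (\<lambda>x. c (a + s *\<^sub>R x)) x) \<le> deriv_bound c vs"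
proof -
  have "norm (iter_deriv vs (\<lambda>x. c (a + s *\<^sub>R x)) x) = \<bar>s\<bar> ^ length vs * norm (iter_deriv vs c (a + s *\<^sub>R x))"
    by (simp add: iter_deriv_affine[OF bounded_smooth_imp_smooth_fun[OF c] vs] power_abs)
  also have "\<dots> \<le> 1 * deriv_bound c vs"
    using s by (intro mult_mono power_le_one norm_iter_deriv_le_deriv_bound c vs deriv_bound_nonneg) auto
  finally show ?thesis by simp
qed

lemma bounded_smooth_affine:
  assumes c: "bounded_smooth c" and s: "\<bar>s\<bar> \<le> 1"
  shows "bounded_smooth (\<lambda>x. c (a + s *\<^sub>R x))"
  unfolding bounded_smooth_def
  using smooth_fun_affine[OF bounded_smooth_imp_smooth_fun[OF c]] norm_iter_deriv_affine_le[OF c s]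
  by blast

lemma norm_sum_list_le: "norm (\<Sum>p\<leftarrow>ps. F p) \<le> (\<Sum>p\<leftarrow>ps. norm (F p :: 'b::real_normed_vector))"
  by (induction ps) (auto intro: norm_triangle_le)

lemma norm_iter_deriv_mult_le:
  assumes c: "smooth_fun c" and f: "smooth_fun f" and vs: "set vs \<subseteq> Basis"
    and B: "\<And>us y. set us \<subseteq> Basis \<Longrightarrow> norm (iter_deriv us c y) \<le> B us"
  shows "norm (iter_deriv vs (\<lambda>x. c x * f x) x) \<le>
           (\<Sum>p\<leftarrow>leibniz_split vs. B (fst p) * norm (iter_deriv (snd p) f x))"
  unfolding iter_deriv_mult[OF c f vs]
  using leibniz_split_Basis[OF vs]
  by (intro order_trans[OF norm_sum_list_le] sum_list_mono)
     (auto simp: norm_mult intro!: mult_right_mono B)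

lemma weighted_iter_deriv_mult_le:
  assumes c: "smooth_fun c" and f: "schwartz f" and vs: "set vs \<subseteq> Basis"
    and B: "\<And>us y. set us \<subseteq> Basis \<Longrightarrow> norm (iter_deriv us c y) \<le> B us"
  shows "(1 + norm x) ^ n * norm (iter_deriv vs (\<lambda>x. c x * f x) x) \<le>
           (\<Sum>p\<leftarrow>leibniz_split vs. B (fst p) * schwartz_seminorm n (snd p) f)"
proof -
  have B0: "0 \<le> B us" if "set us \<subseteq> Basis" for us
    using B[OF that] norm_ge_zero order_trans by blast
  have "(1 + norm x) ^ n * norm (iter_deriv vs (\<lambda>x. c x * f x) x) \<le>
        (1 + norm x) ^ n * (\<Sum>p\<leftarrow>leibniz_split vs. B (fst p) * norm (iter_deriv (snd p) f x))"
    by (intro mult_left_mono norm_iter_deriv_mult_le c schwartz_imp_smooth_fun[OF f] vs B) auto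
  also have "\<dots> = (\<Sum>p\<leftarrow>leibniz_split vs. B (fst p) * ((1 + norm x) ^ n * norm (iter_deriv (snd p) f x)))"
    unfolding sum_list_const_mult[symmetric] by (simp add: mult.left_commute)
  also have "\<dots> \<le> (\<Sum>p\<leftarrow>leibniz_split vs. B (fst p) * schwartz_seminorm n (snd p) f)"
    using leibniz_split_Basis[OF vs]
    by (intro sum_list_mono mult_left_mono schwartz_seminorm_upper f B0) auto
  finally show ?thesis .
qed

lemma schwartz_mult:
  assumes c: "bounded_smooth c" and f: "schwartz f"
  shows "schwartz (\<lambda>x. c x * f x)"
  unfolding schwartz_def
  using smooth_fun_mult[OF bounded_smooth_imp_smooth_fun[OF c] schwartz_imp_smooth_fun[OF f]]
    weighted_iter_deriv_mult_le[OF bounded_smooth_imp_smooth_fun[OF c] f _ norm_iter_deriv_le_deriv_bound[OF c]]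
  by blast

section \<open>Tempered distributions\<close>

lemma tempered_add: "tempered T \<Longrightarrow> schwartz f \<Longrightarrow> schwartz g \<Longrightarrow> T (\<lambda>x. f x + g x) = T f + T g"
  unfolding tempered_def by (elim conjE allE impE) assumption+

lemma tempered_cmult: "tempered T \<Longrightarrow> schwartz f \<Longrightarrow> T (\<lambda>x. c * f x) = c * T f"
  unfolding tempered_def by (elim conjE allE impE) assumption+

lemma tempered_diff:
  assumes T: "tempered T" and f: "schwartz f" and g: "schwartz g"
  shows "T (\<lambda>x. f x - g x) = T f - T g"
  using tempered_add[OF T f schwartz_cmult[OF g], of "-1"] tempered_cmult[OF T g, of "-1"] by simp

lemma tempered_zero: "tempered T \<Longrightarrow> T (\<lambda>x. 0) = 0"
  using tempered_cmult[OF _ schwartz_zero, of T 0] by simp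

lemma tempered_seminorm_bound:
  assumes "tempered T"
  obtains C N where "C \<ge> 0" "\<And>f. schwartz f \<Longrightarrow> norm (T f) \<le> C * seminorm_sum N f"
proof -
  have "\<exists>C N. \<forall>f. schwartz f \<longrightarrow> norm (T f) \<le> C * seminorm_sum N f"
    using assms unfolding tempered_def seminorm_sum_def seminorm_index_def by (elim conjE) assumption
  then obtain C N where CN: "\<And>f. schwartz f \<Longrightarrow> norm (T f) \<le> C * seminorm_sum N f"
    by blast
  have "norm (T f) \<le> max C 0 * seminorm_sum N f" if "schwartz f" for f
    using CN[OF that] mult_right_mono[OF max.cobounded1[of C 0] seminorm_sum_nonneg[OF that, of N]]
    by linarith
  then show ?thesis using that[of "max C 0" N] by auto
qed

lemma tempered_tendsto_zero:
  assumes T: "tempered T"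
    and sch: "eventually (\<lambda>h. schwartz (g h)) F"
    and lim: "\<And>n vs. set vs \<subseteq> Basis \<Longrightarrow> ((\<lambda>h. schwartz_seminorm n vs (g h)) \<longlongrightarrow> 0) F"
  shows "((\<lambda>h. T (g h)) \<longlongrightarrow> 0) F"
proof -
  obtain C N where CN: "\<And>f. schwartz f \<Longrightarrow> norm (T f) \<le> C * seminorm_sum N f"
    using tempered_seminorm_bound[OF T] by blast
  have "((\<lambda>h. seminorm_sum N (g h)) \<longlongrightarrow> (\<Sum>q\<in>(seminorm_index N :: (nat \<times> 'a list) set). 0)) F"
    unfolding seminorm_sum_eq by (intro tendsto_sum lim) (auto dest: seminorm_indexD)
  then have "((\<lambda>h. C * seminorm_sum N (g h)) \<longlongrightarrow> 0) F"
    by (simp add: tendsto_mult_right_zero)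
  moreover have "eventually (\<lambda>h. norm (T (g h)) \<le> C * seminorm_sum N (g h)) F"
    using sch by (rule eventually_mono) (rule CN)
  ultimately show ?thesis by (rule Lim_null_comparison[rotated])
qed

section \<open>Convergence in the Schwartz topology\<close>

lemma has_vector_derivative_at_0I:
  assumes "((\<lambda>t. inverse t *\<^sub>R (f t - f 0) - D) \<longlongrightarrow> 0) (at (0::real))"
  shows "(f has_vector_derivative D) (at 0)"
proof -
  have "eventually (\<lambda>t. norm (inverse t *\<^sub>R (f t - f 0) - D) =
          norm ((f t - f 0) - (t - 0) *\<^sub>R D) / norm (t - 0)) (at (0::real))"
  proof (rule eventually_mono[OF eventually_neq_at_within[of 0 0 UNIV]])
    fix t :: real assume t: "t \<noteq> 0"
    have "inverse t *\<^sub>R (f t - f 0) - D = inverse t *\<^sub>R ((f t - f 0) - t *\<^sub>R D)"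
      using t by (simp add: algebra_simps)
    then show "norm (inverse t *\<^sub>R (f t - f 0) - D) = norm ((f t - f 0) - (t - 0) *\<^sub>R D) / norm (t - 0)"
      by (simp add: divide_inverse mult.commute)
  qed
  then have "((\<lambda>t. norm ((f t - f 0) - (t - 0) *\<^sub>R D) / norm (t - 0)) \<longlongrightarrow> 0) (at (0::real))"
    using tendsto_norm_zero[OF assms] by (rule Lim_transform_eventually[rotated])
  then show ?thesis
    unfolding has_vector_derivative_def has_derivative_iff_norm
    using bounded_linear_scaleR_left by blast
qed

lemma norm_diff_le_derivative_bound:
  fixes g :: "real \<Rightarrow> 'b::real_normed_vector"
  assumes d: "\<And>t. t \<in> closed_segment a b \<Longrightarrow> (g has_vector_derivative g' t) (at t)"
    and B: "\<And>t. t \<in> closed_segment a b \<Longrightarrow> norm (g' t) \<le> B"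
  shows "norm (g b - g a) \<le> B * \<bar>b - a\<bar>"
proof -
  have "norm (g b - g a) \<le> B * norm (b - a)"
  proof (rule differentiable_bound[OF convex_closed_segment, of a b g "\<lambda>t h. h *\<^sub>R g' t"])
    fix t assume t: "t \<in> closed_segment a b"
    show "(g has_derivative (\<lambda>h. h *\<^sub>R g' t)) (at t within closed_segment a b)"
      using d[OF t] unfolding has_vector_derivative_def by (rule has_derivative_at_withinI)
    have "onorm (\<lambda>h::real. h *\<^sub>R g' t) = onorm (\<lambda>h::real. h) * norm (g' t)"
      by (rule onorm_scaleR_left[OF bounded_linear_ident])
    then show "onorm (\<lambda>h::real. h *\<^sub>R g' t) \<le> B" using B[OF t] by (simp add: onorm_id)
  qed auto
  then show ?thesis by simp
qed

lemma abs_le_of_closed_segment_0: "(t::real) \<in> closed_segment 0 c \<Longrightarrow> \<bar>t\<bar> \<le> \<bar>c\<bar>"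
  using segment_bound1[of t 0 c] by simp

lemma weighted_iter_deriv_near_le:
  assumes f: "schwartz f" and vs: "set vs \<subseteq> Basis" and z: "norm z \<le> 1"
  shows "(1 + norm y) ^ n * norm (iter_deriv vs f (y + z)) \<le> 2 ^ n * schwartz_seminorm n vs f"
proof -
  have "(1 + norm y) ^ n \<le> (1 + norm (y + z)) ^ n * (1 + norm z) ^ n"
    using weight_translate_power_le[of y n z] by (simp add: add.commute)
  also have "\<dots> \<le> (1 + norm (y + z)) ^ n * 2 ^ n"
    using z by (intro mult_left_mono power_mono) auto
  finally have "(1 + norm y) ^ n * norm (iter_deriv vs f (y + z))
                  \<le> 2 ^ n * ((1 + norm (y + z)) ^ n * norm (iter_deriv vs f (y + z)))"
    by (metis mult.assoc mult.commute mult_right_mono norm_ge_zero)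
  also have "\<dots> \<le> 2 ^ n * schwartz_seminorm n vs f"
    by (intro mult_left_mono schwartz_seminorm_upper f vs) auto
  finally show ?thesis .
qed

definition diff_quot_error :: "('a::euclidean_space \<Rightarrow> complex) \<Rightarrow> 'a \<Rightarrow> real \<Rightarrow> 'a \<Rightarrow> complex" where
  "diff_quot_error g v t y = complex_of_real (inverse t) * (g (t *\<^sub>R v + y) - g y) - dir_deriv v g y"

lemma schwartz_diff_quot_error:
  assumes g: "schwartz g" and v: "v \<in> Basis"
  shows "schwartz (diff_quot_error g v t)"
  unfolding diff_quot_error_def
  using schwartz_iter_deriv[OF g, of "[v]"] v
  by (intro schwartz_diff schwartz_cmult schwartz_translate g) simp_all

lemma iter_deriv_diff_quot_error:
  assumes g: "schwartz g" and v: "v \<in> Basis" and vs: "set vs \<subseteq> Basis"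
  shows "iter_deriv vs (diff_quot_error g v t) y = complex_of_real (inverse t) *
      (iter_deriv vs g (t *\<^sub>R v + y) - iter_deriv vs g y) - iter_deriv (v#vs) g y"
proof -
  have sg: "smooth_fun g" by (rule schwartz_imp_smooth_fun[OF g])
  have s1: "smooth_fun (\<lambda>y. g (t *\<^sub>R v + y) - g y)"
    by (intro smooth_fun_diff smooth_fun_translate sg)
  have s2: "smooth_fun (dir_deriv v g)" using smooth_fun_iter_deriv[OF sg, of "[v]"] v by simp
  have "diff_quot_error g v t =
          (\<lambda>y. complex_of_real (inverse t) * (g (t *\<^sub>R v + y) - g y) + (-1) * dir_deriv v g y)"
    by (auto simp: diff_quot_error_def)
  then have "iter_deriv vs (diff_quot_error g v t) y = complex_of_real (inverse t) *
      iter_deriv vs (\<lambda>y. g (t *\<^sub>R v + y) - g y) y - iter_deriv vs (dir_deriv v g) y"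
    by (simp only: iter_deriv_lincomb[OF s1 s2 vs]) simp
  moreover have "iter_deriv vs (dir_deriv v g) = iter_deriv (v#vs) g"
    using iter_deriv_append[of vs "[v]" g] iter_deriv_snoc[OF sg vs v] by simp
  ultimately show ?thesis
    by (simp add: iter_deriv_diff[OF smooth_fun_translate[OF sg] sg vs] iter_deriv_translate)
qed

lemma weighted_diff_quot_error_le:
  assumes g: "schwartz g" and v: "v \<in> Basis" and vs: "set vs \<subseteq> Basis"
    and t: "t \<noteq> 0" "\<bar>t\<bar> \<le> 1"
  shows "(1 + norm y) ^ n * norm (iter_deriv vs (diff_quot_error g v t) y)
           \<le> 2 ^ n * schwartz_seminorm n (v#v#vs) g * \<bar>t\<bar>"
proof -
  have sg: "smooth_fun g" by (rule schwartz_imp_smooth_fun[OF g])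
  have vvs: "set (v#vs) \<subseteq> Basis" "set (v#v#vs) \<subseteq> Basis" using v vs by auto
  define W where "W = (1 + norm y) ^ n"
  define M where "M = 2 ^ n * schwartz_seminorm n (v#v#vs) g"
  let ?G = "\<lambda>s. W *\<^sub>R iter_deriv vs g (y + s *\<^sub>R v)" and ?G1 = "\<lambda>s. W *\<^sub>R iter_deriv (v#vs) g (y + s *\<^sub>R v)"
  have W: "W \<ge> 0" unfolding W_def by simp
  have dG: "(?G has_vector_derivative ?G1 s) (at s within S)" for s S
    by (rule has_vector_derivative_at_within,
        intro bounded_linear.has_vector_derivative[OF bounded_linear_scaleR_right] smooth_fun_line_deriv[OF sg vs v])
  have G1_lipschitz: "norm (?G1 s - ?G1 0) \<le> M * \<bar>s\<bar>" if "\<bar>s\<bar> \<le> 1" for s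
  proof -
    have "norm (?G1 s - ?G1 0) \<le> M * \<bar>s - 0\<bar>"
    proof (rule norm_diff_le_derivative_bound)
      fix r assume r: "r \<in> closed_segment 0 s"
      show "(?G1 has_vector_derivative W *\<^sub>R iter_deriv (v#v#vs) g (y + r *\<^sub>R v)) (at r)"
        by (intro bounded_linear.has_vector_derivative[OF bounded_linear_scaleR_right]
            smooth_fun_line_deriv[OF sg vvs(1) v])
      have "norm (r *\<^sub>R v) \<le> 1" using abs_le_of_closed_segment_0[OF r] that v by simp
      then show "norm (W *\<^sub>R iter_deriv (v#v#vs) g (y + r *\<^sub>R v)) \<le> M"
        using weighted_iter_deriv_near_le[OF g vvs(2), of "r *\<^sub>R v" y n] W
        unfolding W_def M_def by simp
    qed
    then show ?thesis by simp
  qed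
  have "norm (?G t - ?G 0 - (t - 0) *\<^sub>R ?G1 0) \<le> norm (t - 0) * (M * \<bar>t\<bar>)"
  proof (rule vector_differentiable_bound_linearization[OF dG])
    fix s assume "s \<in> closed_segment 0 t"
    then have "\<bar>s\<bar> \<le> \<bar>t\<bar>" by (rule abs_le_of_closed_segment_0)
    moreover have "M \<ge> 0" unfolding M_def using schwartz_seminorm_nonneg[OF g vvs(2)] by simp
    ultimately show "norm (?G1 s - ?G1 0) \<le> M * \<bar>t\<bar>"
      using G1_lipschitz[of s] t by (meson mult_left_mono order_trans)
  qed auto
  moreover have "W *\<^sub>R iter_deriv vs (diff_quot_error g v t) y = inverse t *\<^sub>R (?G t - ?G 0 - t *\<^sub>R ?G1 0)"
    using t(1) by (simp add: iter_deriv_diff_quot_error[OF g v vs] add.commute scaleR_conv_of_real algebra_simps)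
  ultimately have "norm (W *\<^sub>R iter_deriv vs (diff_quot_error g v t) y) \<le> inverse \<bar>t\<bar> * (\<bar>t\<bar> * (M * \<bar>t\<bar>))"
    by (simp add: mult_left_mono)
  then show ?thesis using t(1) unfolding W_def M_def by (simp add: field_simps)
qed

lemma schwartz_seminorm_tendsto_0I:
  assumes sch: "eventually (\<lambda>h. schwartz (g h)) F" and vs: "set vs \<subseteq> Basis"
    and bound: "eventually (\<lambda>h. \<forall>x. (1 + norm x) ^ n * norm (iter_deriv vs (g h) x) \<le> b h) F"
    and b: "(b \<longlongrightarrow> 0) F"
  shows "((\<lambda>h. schwartz_seminorm n vs (g h)) \<longlongrightarrow> 0) F"
proof (rule Lim_null_comparison[OF _ b])
  show "eventually (\<lambda>h. norm (schwartz_seminorm n vs (g h)) \<le> b h) F"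
    using eventually_conj[OF sch bound]
    by eventually_elim (simp add: schwartz_seminorm_nonneg[OF _ vs] schwartz_seminorm_least)
qed

lemma seminorm_diff_quot_error_tendsto_0:
  assumes g: "schwartz g" and v: "v \<in> Basis" and vs: "set vs \<subseteq> Basis"
  shows "((\<lambda>t. schwartz_seminorm n vs (diff_quot_error g v t)) \<longlongrightarrow> 0) (at (0::real))"
proof (rule schwartz_seminorm_tendsto_0I[OF _ vs])
  show "eventually (\<lambda>t. schwartz (diff_quot_error g v t)) (at 0)"
    by (intro always_eventually allI schwartz_diff_quot_error g v)
  have "eventually (\<lambda>t::real. t \<noteq> 0 \<and> \<bar>t\<bar> < 1) (at 0)"
    by (intro eventually_conj eventually_neq_at_within)
       (auto simp: eventually_at dist_real_def intro!: exI[of _ 1])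
  then show "eventually (\<lambda>t. \<forall>y. (1 + norm y) ^ n * norm (iter_deriv vs (diff_quot_error g v t) y)
                \<le> 2 ^ n * schwartz_seminorm n (v#v#vs) g * \<bar>t\<bar>) (at 0)"
    by eventually_elim (auto intro: weighted_diff_quot_error_le[OF g v vs])
  show "((\<lambda>t. 2 ^ n * schwartz_seminorm n (v#v#vs) g * \<bar>t\<bar>) \<longlongrightarrow> 0) (at (0::real))"
    by (auto intro!: tendsto_eq_intros)
qed

lemma norm_sum_list_Basis_le:
  assumes "\<forall>p\<in>set cs. snd p \<in> (Basis::'a::euclidean_space set)"
  shows "norm (\<Sum>p\<leftarrow>cs. fst p *\<^sub>R snd p) \<le> (\<Sum>p\<leftarrow>cs. \<bar>fst p\<bar>)"
  using assms by (intro order_trans[OF norm_sum_list_le] sum_list_mono) simp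

lemma norm_diff_le_along_Basis:
  fixes H :: "'a::euclidean_space \<Rightarrow> complex"
  assumes dH: "\<And>b z. b \<in> Basis \<Longrightarrow> has_dir_deriv H b z (D b z)"
    and bnd: "\<And>b z. b \<in> Basis \<Longrightarrow> norm (z - y) \<le> 1 \<Longrightarrow> norm (D b z) \<le> M"
    and cs: "\<forall>p\<in>set cs. snd p \<in> Basis" "(\<Sum>p\<leftarrow>cs. \<bar>fst p\<bar>) \<le> 1"
  shows "norm (H (y + (\<Sum>p\<leftarrow>cs. fst p *\<^sub>R snd p)) - H y) \<le> M * (\<Sum>p\<leftarrow>cs. \<bar>fst p\<bar>)"
  using cs
proof (induction cs)
  case Nil
  then show ?case by simp
next
  case (Cons p cs)
  obtain c b where p: "p = (c, b)" by (cases p)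
  have b: "b \<in> Basis" using Cons.prems p by simp
  define P where "P = (\<Sum>p\<leftarrow>cs. fst p *\<^sub>R snd p)"
  have sc: "(\<Sum>p\<leftarrow>cs. \<bar>fst p\<bar>) \<le> 1 - \<bar>c\<bar>" using Cons.prems p by simp
  have IH: "norm (H (y + P) - H y) \<le> M * (\<Sum>p\<leftarrow>cs. \<bar>fst p\<bar>)"
    unfolding P_def using Cons.IH Cons.prems sc by simp
  have nP: "norm P \<le> (\<Sum>p\<leftarrow>cs. \<bar>fst p\<bar>)"
    unfolding P_def by (rule norm_sum_list_Basis_le) (use Cons.prems in simp)
  have step: "norm (H ((y + P) + c *\<^sub>R b) - H ((y + P) + 0 *\<^sub>R b)) \<le> M * \<bar>c - 0\<bar>"
  proof (rule norm_diff_le_derivative_bound[of 0 c "\<lambda>r. H ((y + P) + r *\<^sub>R b)"])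
    fix r assume r: "r \<in> closed_segment 0 c"
    show "((\<lambda>r. H ((y + P) + r *\<^sub>R b)) has_vector_derivative D b ((y + P) + r *\<^sub>R b)) (at r)"
      by (rule has_dir_deriv_imp_line_deriv, rule dH[OF b])
    have "norm ((y + P + r *\<^sub>R b) - y) \<le> norm P + norm (r *\<^sub>R b)"
      using norm_triangle_ineq[of P "r *\<^sub>R b"] by (simp add: algebra_simps)
    also have "\<dots> \<le> (\<Sum>p\<leftarrow>cs. \<bar>fst p\<bar>) + \<bar>c\<bar>"
      using nP abs_le_of_closed_segment_0[OF r] b by simp
    also have "\<dots> \<le> 1" using sc by simp
    finally show "norm (D b ((y + P) + r *\<^sub>R b)) \<le> M" by (intro bnd b)
  qed
  have "H (y + (\<Sum>p\<leftarrow>p#cs. fst p *\<^sub>R snd p)) - H y =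
        (H ((y + P) + c *\<^sub>R b) - H ((y + P) + 0 *\<^sub>R b)) + (H (y + P) - H y)"
    by (simp add: p P_def algebra_simps)
  then have "norm (H (y + (\<Sum>p\<leftarrow>p#cs. fst p *\<^sub>R snd p)) - H y) \<le> M * \<bar>c\<bar> + M * (\<Sum>p\<leftarrow>cs. \<bar>fst p\<bar>)"
    using step IH by (smt (verit) norm_triangle_ineq diff_0_right)
  then show ?case by (simp add: p distrib_left)
qed

lemma norm_diff_le_partials:
  fixes H :: "'a::euclidean_space \<Rightarrow> complex"
  assumes dH: "\<And>b z. b \<in> Basis \<Longrightarrow> has_dir_deriv H b z (D b z)"
    and bnd: "\<And>b z. b \<in> Basis \<Longrightarrow> norm (z - y) \<le> 1 \<Longrightarrow> norm (D b z) \<le> M"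
    and k: "real DIM('a) * norm k \<le> 1"
  shows "norm (H (y + k) - H y) \<le> M * (real DIM('a) * norm k)"
proof -
  obtain L :: "'a list" where L: "set L = Basis" "distinct L"
    using finite_distinct_list[OF finite_Basis] by blast
  define cs where "cs = map (\<lambda>b. (k \<bullet> b, b)) L"
  have "(\<Sum>p\<leftarrow>cs. fst p *\<^sub>R snd p) = k"
    using euclidean_representation[of k] sum.distinct_set_conv_list[OF L(2), of "\<lambda>b. (k \<bullet> b) *\<^sub>R b"] L
    by (simp add: cs_def o_def)
  moreover have cs_le: "(\<Sum>p\<leftarrow>cs. \<bar>fst p\<bar>) \<le> real DIM('a) * norm k"
  proof -
    have "(\<Sum>p\<leftarrow>cs. \<bar>fst p\<bar>) = (\<Sum>b\<in>Basis. \<bar>k \<bullet> b\<bar>)"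
      using sum.distinct_set_conv_list[OF L(2), of "\<lambda>b. \<bar>k \<bullet> b\<bar>"] L by (simp add: cs_def o_def)
    also have "\<dots> \<le> (\<Sum>b\<in>(Basis::'a set). norm k)" by (intro sum_mono Basis_le_norm)
    finally show ?thesis by simp
  qed
  moreover have "norm (H (y + (\<Sum>p\<leftarrow>cs. fst p *\<^sub>R snd p)) - H y) \<le> M * (\<Sum>p\<leftarrow>cs. \<bar>fst p\<bar>)"
    using L cs_le k by (intro norm_diff_le_along_Basis[OF dH bnd]) (auto simp: cs_def)
  moreover have "M \<ge> 0"
  proof -
    obtain b :: 'a where "b \<in> Basis" using nonempty_Basis by blast
    then have "norm (D b y) \<le> M" by (intro bnd) simp_all
    then show ?thesis by (rule order_trans[OF norm_ge_zero])
  qed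
  ultimately show ?thesis using order_trans mult_left_mono by metis
qed

lemma weighted_translate_diff_le:
  assumes g: "schwartz g" and vs: "set vs \<subseteq> Basis" and k: "real DIM('a) * norm k \<le> 1"
  shows "(1 + norm y) ^ n * norm (iter_deriv vs g (k + y) - iter_deriv vs g y)
     \<le> (2 ^ n * (\<Sum>b\<in>(Basis::'a::euclidean_space set). schwartz_seminorm n (b#vs) g)) * (real DIM('a) * norm k)"
proof -
  define W where "W = (1 + norm y) ^ n"
  have W: "W \<ge> 0" unfolding W_def by simp
  have "norm (W *\<^sub>R iter_deriv vs g (y + k) - W *\<^sub>R iter_deriv vs g y)
     \<le> (2 ^ n * (\<Sum>b\<in>(Basis::'a set). schwartz_seminorm n (b#vs) g)) * (real DIM('a) * norm k)"
  proof (rule norm_diff_le_partials[OF _ _ k])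
    fix b z assume b: "b \<in> (Basis::'a set)"
    show "has_dir_deriv (\<lambda>z. W *\<^sub>R iter_deriv vs g z) b z (W *\<^sub>R iter_deriv (b # vs) g z)"
      by (rule bounded_linear.has_vector_derivative[OF bounded_linear_scaleR_right
          smooth_fun_has_dir_deriv[OF schwartz_imp_smooth_fun[OF g] vs b]])
    assume z: "norm (z - y) \<le> 1"
    have bvs: "set (b#vs) \<subseteq> Basis" using b vs by simp
    have "norm (W *\<^sub>R iter_deriv (b # vs) g (y + (z - y))) \<le> 2 ^ n * schwartz_seminorm n (b#vs) g"
      using weighted_iter_deriv_near_le[OF g bvs z, of y n] W unfolding W_def by simp
    also have "\<dots> \<le> 2 ^ n * (\<Sum>b\<in>(Basis::'a set). schwartz_seminorm n (b#vs) g)"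
      using vs by (intro mult_left_mono member_le_sum b) (auto intro!: schwartz_seminorm_nonneg[OF g])
    finally show "norm (W *\<^sub>R iter_deriv (b # vs) g z) \<le> 2 ^ n * (\<Sum>b\<in>(Basis::'a set). schwartz_seminorm n (b#vs) g)"
      by simp
  qed
  then show ?thesis
    using W unfolding W_def by (simp add: scaleR_diff_right[symmetric] add.commute)
qed

lemma seminorm_translate_diff_tendsto_0:
  assumes g: "schwartz g" and vs: "set vs \<subseteq> Basis"
  shows "((\<lambda>k. schwartz_seminorm n vs (\<lambda>y. g (k + y) - g y)) \<longlongrightarrow> 0) (at (0::'a::euclidean_space))"
proof (rule schwartz_seminorm_tendsto_0I[OF _ vs])
  let ?M = "2 ^ n * (\<Sum>b\<in>(Basis::'a set). schwartz_seminorm n (b#vs) g)"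
  have sg: "smooth_fun g" by (rule schwartz_imp_smooth_fun[OF g])
  show "eventually (\<lambda>k. schwartz (\<lambda>y. g (k + y) - g y)) (at 0)"
    by (intro always_eventually allI schwartz_diff schwartz_translate g)
  have "eventually (\<lambda>k::'a. norm k < 1 / real DIM('a)) (at 0)"
    by (auto simp: eventually_at dist_norm intro!: exI[of _ "1 / real DIM('a)"])
  then show "eventually (\<lambda>k. \<forall>y. (1 + norm y) ^ n * norm (iter_deriv vs (\<lambda>y. g (k + y) - g y) y)
                \<le> ?M * (real DIM('a) * norm k)) (at 0)"
  proof eventually_elim
    case (elim k)
    then have "real DIM('a) * norm k \<le> 1" by (simp add: field_simps)
    then show ?case
      using weighted_translate_diff_le[OF g vs]
      by (simp add: iter_deriv_diff[OF smooth_fun_translate[OF sg] sg vs] iter_deriv_translate)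
  qed
  show "((\<lambda>k::'a. ?M * (real DIM('a) * norm k)) \<longlongrightarrow> 0) (at 0)"
    by (auto intro!: tendsto_eq_intros)
qed

section \<open>Pairing a distribution with translates of a test function\<close>

definition shifted_pairing ::
  "(('a::euclidean_space \<Rightarrow> complex) \<Rightarrow> complex) \<Rightarrow> real \<Rightarrow> ('a \<Rightarrow> complex) \<Rightarrow> 'a \<Rightarrow> complex" where
  "shifted_pairing T s g x = T (\<lambda>y. g (x + s *\<^sub>R y))"

lemma tempered_affine_tendsto_0:
  assumes T: "tempered T" and s: "\<bar>s\<bar> = 1" and sch: "\<And>h. schwartz (q h)"
    and lim: "\<And>n vs. set vs \<subseteq> Basis \<Longrightarrow> ((\<lambda>h. schwartz_seminorm n vs (q h)) \<longlongrightarrow> 0) F"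
  shows "((\<lambda>h. T (\<lambda>y. q h (x + s *\<^sub>R y))) \<longlongrightarrow> 0) F"
proof (rule tempered_tendsto_zero[OF T])
  show "eventually (\<lambda>h. schwartz (\<lambda>y. q h (x + s *\<^sub>R y))) F"
    by (intro always_eventually allI schwartz_affine sch s)
  fix n :: nat and vs :: "'a list" assume vs: "set vs \<subseteq> Basis"
  show "((\<lambda>h. schwartz_seminorm n vs (\<lambda>y. q h (x + s *\<^sub>R y))) \<longlongrightarrow> 0) F"
  proof (rule schwartz_seminorm_tendsto_0I[OF _ vs])
    show "eventually (\<lambda>h. schwartz (\<lambda>y. q h (x + s *\<^sub>R y))) F"
      by (intro always_eventually allI schwartz_affine sch s)
    show "eventually (\<lambda>h. \<forall>y. (1 + norm y) ^ n * norm (iter_deriv vs (\<lambda>y. q h (x + s *\<^sub>R y)) y)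
              \<le> (1 + norm x) ^ n * schwartz_seminorm n vs (q h)) F"
      by (intro always_eventually allI weighted_iter_deriv_affine_le sch s vs)
    show "((\<lambda>h. (1 + norm x) ^ n * schwartz_seminorm n vs (q h)) \<longlongrightarrow> 0) F"
      using tendsto_mult_right_zero[OF lim[OF vs]] by simp
  qed
qed

lemma isCont_shifted_pairing:
  assumes T: "tempered T" and g: "schwartz g" and s: "\<bar>s\<bar> = 1"
  shows "isCont (shifted_pairing T s g) x"
proof -
  have "T (\<lambda>y. g (k + (x + s *\<^sub>R y)) - g (x + s *\<^sub>R y)) = shifted_pairing T s g (x + k) - shifted_pairing T s g x" for k
    using tempered_diff[OF T schwartz_affine[OF g s] schwartz_affine[OF g s], of "x + k" x]
    by (simp add: shifted_pairing_def add_ac)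
  moreover have "((\<lambda>k. T (\<lambda>y. g (k + (x + s *\<^sub>R y)) - g (x + s *\<^sub>R y))) \<longlongrightarrow> 0) (at 0)"
    using tempered_affine_tendsto_0[OF T s, of "\<lambda>k y. g (k + y) - g y"]
    by (simp add: schwartz_diff schwartz_translate g seminorm_translate_diff_tendsto_0)
  ultimately have "((\<lambda>k. shifted_pairing T s g (x + k)) \<longlongrightarrow> shifted_pairing T s g x) (at 0)"
    by (simp add: LIM_zero_iff)
  then show ?thesis
    unfolding isCont_def using LIM_offset_zero_cancel by blast
qed

lemma shifted_pairing_has_dir_deriv:
  assumes T: "tempered T" and g: "schwartz g" and s: "\<bar>s\<bar> = 1" and v: "v \<in> Basis"
  shows "has_dir_deriv (shifted_pairing T s g) v x (shifted_pairing T s (dir_deriv v g) x)"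
proof (rule has_vector_derivative_at_0I)
  have dg: "schwartz (dir_deriv v g)" using schwartz_iter_deriv[OF g, of "[v]"] v by simp
  have "T (\<lambda>y. diff_quot_error g v t (x + s *\<^sub>R y)) =
      inverse t *\<^sub>R (shifted_pairing T s g (x + t *\<^sub>R v) - shifted_pairing T s g (x + 0 *\<^sub>R v))
        - shifted_pairing T s (dir_deriv v g) x" for t
  proof -
    let ?A = "\<lambda>y. g ((x + t *\<^sub>R v) + s *\<^sub>R y)" and ?B = "\<lambda>y. g (x + s *\<^sub>R y)"
      and ?C = "\<lambda>y. dir_deriv v g (x + s *\<^sub>R y)"
    have sA: "schwartz ?A" and sB: "schwartz ?B" and sC: "schwartz ?C"
      by (intro schwartz_affine g s dg)+
    have "T (\<lambda>y. diff_quot_error g v t (x + s *\<^sub>R y)) = T (\<lambda>y. complex_of_real (inverse t) * (?A y - ?B y) - ?C y)"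
      by (simp add: diff_quot_error_def add_ac)
    also have "\<dots> = T (\<lambda>y. complex_of_real (inverse t) * (?A y - ?B y)) - T ?C"
      by (rule tempered_diff[OF T schwartz_cmult[OF schwartz_diff[OF sA sB]] sC])
    also have "T (\<lambda>y. complex_of_real (inverse t) * (?A y - ?B y)) = complex_of_real (inverse t) * (T ?A - T ?B)"
      by (simp add: tempered_cmult[OF T schwartz_diff[OF sA sB]] tempered_diff[OF T sA sB])
    finally show ?thesis by (simp add: shifted_pairing_def scaleR_conv_of_real)
  qed
  moreover have "((\<lambda>t. T (\<lambda>y. diff_quot_error g v t (x + s *\<^sub>R y))) \<longlongrightarrow> 0) (at 0)"
    by (intro tempered_affine_tendsto_0 T s schwartz_diff_quot_error g v seminorm_diff_quot_error_tendsto_0)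
  ultimately show "((\<lambda>t. inverse t *\<^sub>R ((\<lambda>t. shifted_pairing T s g (x + t *\<^sub>R v)) t
      - (\<lambda>t. shifted_pairing T s g (x + t *\<^sub>R v)) 0) - shifted_pairing T s (dir_deriv v g) x) \<longlongrightarrow> 0) (at 0)"
    by simp
qed

lemma iter_deriv_shifted_pairing:
  assumes T: "tempered T" and g: "schwartz g" and s: "\<bar>s\<bar> = 1" and ws: "set ws \<subseteq> Basis"
  shows "iter_deriv ws (shifted_pairing T s g) = shifted_pairing T s (iter_deriv ws g)"
  using ws
proof (induction ws)
  case Nil
  then show ?case by simp
next
  case (Cons v ws)
  then have v: "v \<in> Basis" and ws: "set ws \<subseteq> Basis" by auto
  show ?case
    using Cons.IH[OF ws] dir_deriv_eqI[OF shifted_pairing_has_dir_deriv[OF T schwartz_iter_deriv[OF g ws] s v]]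
    by auto
qed

lemma smooth_fun_shifted_pairing:
  assumes T: "tempered T" and g: "schwartz g" and s: "\<bar>s\<bar> = 1"
  shows "smooth_fun (shifted_pairing T s g)"
proof (rule smooth_funI)
  fix vs :: "'a list" assume vs: "set vs \<subseteq> Basis"
  show "continuous_on UNIV (iter_deriv vs (shifted_pairing T s g))"
    unfolding iter_deriv_shifted_pairing[OF T g s vs]
    by (intro continuous_at_imp_continuous_on ballI isCont_shifted_pairing T schwartz_iter_deriv g vs s)
next
  fix vs :: "'a list" and v :: 'a and x assume vs: "set vs \<subseteq> Basis" and v: "v \<in> Basis"
  show "\<exists>d. has_dir_deriv (iter_deriv vs (shifted_pairing T s g)) v x d"
    unfolding iter_deriv_shifted_pairing[OF T g s vs]
    using shifted_pairing_has_dir_deriv[OF T schwartz_iter_deriv[OF g vs] s v] by blast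
qed

section \<open>Smooth cutoff functions\<close>

definition expinv :: "nat \<Rightarrow> real \<Rightarrow> real" where
  "expinv k t = (if 0 < t then exp (- inverse t) * inverse t ^ k else 0)"

lemma expinv_deriv_pos:
  assumes t: "(t::real) > 0"
  shows "(expinv k has_real_derivative (expinv (k + 2) t - real k * expinv (k + 1) t)) (at t)"
proof -
  have "real k * inverse t ^ (k - 1) * (- inverse (t ^ 2)) = - real k * inverse t ^ (k + 1)"
    using t by (cases k) (auto simp: power2_eq_square field_simps)
  moreover have "((\<lambda>t. inverse t ^ k) has_real_derivative real k * inverse t ^ (k - 1) * (- inverse (t ^ 2))) (at t)"
    using t by (auto intro!: derivative_eq_intros simp: power2_eq_square)
  ultimately have "((\<lambda>t. inverse t ^ k) has_real_derivative - real k * inverse t ^ (k + 1)) (at t)"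
    by metis
  moreover have "((\<lambda>t. exp (- inverse t)) has_real_derivative exp (- inverse t) * inverse t ^ 2) (at t)"
    using t by (auto intro!: derivative_eq_intros simp: power2_eq_square)
  ultimately have "((\<lambda>t. exp (- inverse t) * inverse t ^ k) has_real_derivative
     exp (- inverse t) * inverse t ^ 2 * inverse t ^ k + (- real k * inverse t ^ (k + 1)) * exp (- inverse t)) (at t)"
    by (rule DERIV_mult[rotated])
  also have "exp (- inverse t) * inverse t ^ 2 * inverse t ^ k + (- real k * inverse t ^ (k + 1)) * exp (- inverse t)
     = expinv (k + 2) t - real k * expinv (k + 1) t"
    using t by (simp add: expinv_def power_add power2_eq_square algebra_simps)
  finally show ?thesis
    by (rule has_field_derivative_transform_within_open[of _ _ _ "{0<..}"]) (use t in \<open>auto simp: expinv_def\<close>)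
qed

lemma expinv_deriv_neg:
  assumes t: "(t::real) < 0"
  shows "(expinv k has_real_derivative (expinv (k + 2) t - real k * expinv (k + 1) t)) (at t)"
proof -
  have "((\<lambda>t. 0) has_real_derivative 0) (at t)" by simp
  then have "(expinv k has_real_derivative 0) (at t)"
    by (rule has_field_derivative_transform_within_open[of _ _ _ "{..<0}"]) (use t in \<open>auto simp: expinv_def\<close>)
  then show ?thesis using t by (simp add: expinv_def)
qed

lemma exp_inverse_power_tendsto_0: "((\<lambda>h. exp (- inverse h) * inverse h ^ m) \<longlongrightarrow> 0) (at_right (0::real))"
proof -
  have "((\<lambda>x. x ^ m / exp x) \<longlongrightarrow> (0::real)) at_top" by (rule tendsto_power_div_exp_0)
  then have "((\<lambda>h. (inverse h) ^ m / exp (inverse h)) \<longlongrightarrow> (0::real)) (at_right 0)"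
    by (rule filterlim_compose[OF _ filterlim_inverse_at_top_right])
  then show ?thesis by (simp add: exp_minus divide_inverse mult.commute)
qed

lemma expinv_deriv_0: "(expinv k has_real_derivative (expinv (k + 2) 0 - real k * expinv (k + 1) 0)) (at 0)"
proof -
  have r: "((\<lambda>h. (expinv k h - expinv k 0) / (h - 0)) \<longlongrightarrow> 0) (at_right (0::real))"
  proof -
    have "((\<lambda>h. exp (- inverse h) * inverse h ^ (k + 1)) \<longlongrightarrow> 0) (at_right (0::real))" by (rule exp_inverse_power_tendsto_0)
    moreover have "eventually (\<lambda>h. exp (- inverse h) * inverse h ^ (k + 1) = (expinv k h - expinv k 0) / (h - 0)) (at_right (0::real))"
      by (auto simp: eventually_at_right_less eventually_at_filter expinv_def divide_inverse elim!: eventually_mono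
               intro!: eventually_at_rightI[of 0 1])
    ultimately show ?thesis by (rule Lim_transform_eventually)
  qed
  have l: "((\<lambda>h. (expinv k h - expinv k 0) / (h - 0)) \<longlongrightarrow> 0) (at_left (0::real))"
  proof -
    have "eventually (\<lambda>h. 0 = (expinv k h - expinv k 0) / (h - 0)) (at_left (0::real))"
      by (auto simp: expinv_def intro!: eventually_at_leftI[of "-1" 0])
    then show ?thesis by (rule Lim_transform_eventually[OF tendsto_const])
  qed
  have "((\<lambda>h. (expinv k h - expinv k 0) / (h - 0)) \<longlongrightarrow> 0) (at (0::real))"
    using l r by (simp add: filterlim_split_at)
  then show ?thesis by (simp add: has_field_derivative_iff expinv_def)
qed

lemma expinv_deriv: "(expinv k has_real_derivative (expinv (k + 2) t - real k * expinv (k + 1) t)) (at t)"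
  using expinv_deriv_pos expinv_deriv_neg expinv_deriv_0 by (cases "t > 0"; cases "t < 0") (auto simp: not_less)

lemma continuous_on_expinv: "continuous_on UNIV (expinv k)"
  by (intro continuous_at_imp_continuous_on ballI DERIV_isCont[OF expinv_deriv])

text \<open>A class of real functions closed under the operations used to build cutoff functions;
  its members are smooth, with all derivatives in the class again.\<close>

inductive_set elem_smooth :: "('a::euclidean_space \<Rightarrow> real) set" where
  elem_smooth_const: "(\<lambda>x. c) \<in> elem_smooth"
| elem_smooth_inner: "(\<lambda>x. x \<bullet> b) \<in> elem_smooth"
| elem_smooth_add: "f \<in> elem_smooth \<Longrightarrow> g \<in> elem_smooth \<Longrightarrow> (\<lambda>x. f x + g x) \<in> elem_smooth"
| elem_smooth_mult: "f \<in> elem_smooth \<Longrightarrow> g \<in> elem_smooth \<Longrightarrow> (\<lambda>x. f x * g x) \<in> elem_smooth"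
| elem_smooth_expinv: "f \<in> elem_smooth \<Longrightarrow> (\<lambda>x. expinv k (f x)) \<in> elem_smooth"
| elem_smooth_inverse: "f \<in> elem_smooth \<Longrightarrow> (\<forall>x. f x \<noteq> 0) \<Longrightarrow> (\<lambda>x. inverse (f x)) \<in> elem_smooth"

lemma continuous_on_elem_smooth: "f \<in> elem_smooth \<Longrightarrow> continuous_on UNIV f"
  by (induction rule: elem_smooth.induct)
     (auto intro!: continuous_intros continuous_on_compose2[OF continuous_on_expinv])

lemma elem_smooth_line_deriv:
  assumes "f \<in> elem_smooth"
  shows "\<exists>f'\<in>elem_smooth. \<forall>x. ((\<lambda>t. f (x + t *\<^sub>R v)) has_real_derivative f' x) (at 0)"
  using assms
proof (induction rule: elem_smooth.induct)
  case (elem_smooth_const c)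
  show ?case by (auto intro!: bexI[of _ "\<lambda>x. 0"] elem_smooth.elem_smooth_const)
next
  case (elem_smooth_inner b)
  show ?case
  proof (intro bexI[of _ "\<lambda>x. v \<bullet> b"] allI elem_smooth.elem_smooth_const)
    fix x :: 'a
    have "((\<lambda>t. x \<bullet> b + t * (v \<bullet> b)) has_real_derivative 0 + 1 * (v \<bullet> b)) (at 0)"
      by (intro DERIV_add DERIV_const DERIV_cmult_right DERIV_ident)
    then show "((\<lambda>t. (x + t *\<^sub>R v) \<bullet> b) has_real_derivative v \<bullet> b) (at 0)"
      by (simp add: inner_add_left)
  qed
next
  case (elem_smooth_add f g)
  then obtain f' g' where "f' \<in> elem_smooth" "\<And>x. ((\<lambda>t. f (x + t *\<^sub>R v)) has_real_derivative f' x) (at 0)"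
    and "g' \<in> elem_smooth" "\<And>x. ((\<lambda>t. g (x + t *\<^sub>R v)) has_real_derivative g' x) (at 0)"
    by blast
  then show ?case
    by (intro bexI[of _ "\<lambda>x. f' x + g' x"] allI elem_smooth.elem_smooth_add DERIV_add)
next
  case (elem_smooth_mult f g)
  then obtain f' g' where "f' \<in> elem_smooth" and f': "\<And>x. ((\<lambda>t. f (x + t *\<^sub>R v)) has_real_derivative f' x) (at 0)"
    and "g' \<in> elem_smooth" and g': "\<And>x. ((\<lambda>t. g (x + t *\<^sub>R v)) has_real_derivative g' x) (at 0)"
    by blast
  with elem_smooth_mult.hyps show ?case
    using DERIV_mult[OF f' g']
    by (intro bexI[of _ "\<lambda>x. f' x * g x + g' x * f x"] allI elem_smooth.elem_smooth_add
        elem_smooth.elem_smooth_mult) auto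
next
  case (elem_smooth_expinv f k)
  then obtain f' where "f' \<in> elem_smooth" and f': "\<And>x. ((\<lambda>t. f (x + t *\<^sub>R v)) has_real_derivative f' x) (at 0)"
    by blast
  with elem_smooth_expinv.hyps show ?case
    using DERIV_chain2[OF expinv_deriv f', of k]
    by (intro bexI[of _ "\<lambda>x. (expinv (k + 2) (f x) + (- real k) * expinv (k + 1) (f x)) * f' x"] allI
        elem_smooth.intros) auto
next
  case (elem_smooth_inverse f)
  then obtain f' where "f' \<in> elem_smooth" and f': "\<And>x. ((\<lambda>t. f (x + t *\<^sub>R v)) has_real_derivative f' x) (at 0)"
    by blast
  with elem_smooth_inverse.hyps show ?case
    using DERIV_inverse_fun[OF f'] 
    by (intro bexI[of _ "\<lambda>x. (-1) * (f' x * (inverse (f x) * inverse (f x)))"] allI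
        elem_smooth.intros) (auto simp: power2_eq_square inverse_mult_distrib)
qed

lemma iter_deriv_elem_smooth:
  assumes "f \<in> elem_smooth"
  shows "\<exists>h\<in>elem_smooth. iter_deriv vs (\<lambda>x. complex_of_real (f x)) = (\<lambda>x. complex_of_real (h x))"
proof (induction vs)
  case Nil
  then show ?case using assms by auto
next
  case (Cons v vs)
  then obtain h where h: "h \<in> elem_smooth" "iter_deriv vs (\<lambda>x. complex_of_real (f x)) = (\<lambda>x. complex_of_real (h x))"
    by blast
  obtain h' where h': "h' \<in> elem_smooth" "\<And>x. ((\<lambda>t. h (x + t *\<^sub>R v)) has_real_derivative h' x) (at 0)"
    using elem_smooth_line_deriv[OF h(1)] by blast
  have "iter_deriv (v # vs) (\<lambda>x. complex_of_real (f x)) = (\<lambda>x. complex_of_real (h' x))"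
  proof
    fix x
    have "has_dir_deriv (\<lambda>x. complex_of_real (h x)) v x (complex_of_real (h' x))"
      by (rule has_vector_derivative_of_real[OF h'(2)])
    then show "iter_deriv (v # vs) (\<lambda>x. complex_of_real (f x)) x = complex_of_real (h' x)"
      using h(2) by (simp add: dir_deriv_eqI)
  qed
  then show ?case using h'(1) by blast
qed

lemma smooth_fun_elem_smooth:
  assumes "f \<in> elem_smooth"
  shows "smooth_fun (\<lambda>x. complex_of_real (f x))"
proof (rule smooth_funI)
  fix vs :: "'a list"
  obtain h where h: "h \<in> elem_smooth" "iter_deriv vs (\<lambda>x. complex_of_real (f x)) = (\<lambda>x. complex_of_real (h x))"
    using iter_deriv_elem_smooth[OF assms] by blast
  show "continuous_on UNIV (iter_deriv vs (\<lambda>x. complex_of_real (f x)))"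
    unfolding h(2) by (intro continuous_intros continuous_on_elem_smooth h(1))
  fix v :: 'a and x
  obtain h' where h': "h' \<in> elem_smooth" "\<And>x. ((\<lambda>t. h (x + t *\<^sub>R v)) has_real_derivative h' x) (at 0)"
    using elem_smooth_line_deriv[OF h(1)] by blast
  show "\<exists>d. has_dir_deriv (iter_deriv vs (\<lambda>x. complex_of_real (f x))) v x d"
    unfolding h(2) using has_vector_derivative_of_real[OF h'(2)] by blast
qed

lemma elem_smooth_sum: "finite A \<Longrightarrow> (\<And>i. i \<in> A \<Longrightarrow> f i \<in> elem_smooth) \<Longrightarrow> (\<lambda>x. \<Sum>i\<in>A. f i x) \<in> elem_smooth"
proof (induction A rule: finite_induct)
  case empty
  then show ?case using elem_smooth_const[of 0] by simp
next
  case (insert a A)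
  then show ?case using elem_smooth_add[of "f a" "\<lambda>x. \<Sum>i\<in>A. f i x"] by simp
qed

lemma elem_smooth_prod: "finite A \<Longrightarrow> (\<And>i. i \<in> A \<Longrightarrow> f i \<in> elem_smooth) \<Longrightarrow> (\<lambda>x. \<Prod>i\<in>A. f i x) \<in> elem_smooth"
proof (induction A rule: finite_induct)
  case empty
  then show ?case using elem_smooth_const[of 1] by simp
next
  case (insert a A)
  then show ?case using elem_smooth_mult[of "f a" "\<lambda>x. \<Prod>i\<in>A. f i x"] by simp
qed

text \<open>Cutoffs are written with + and * only (1 + (-1) * t rather than 1 - t) so that the
  introduction rules of elem_smooth apply to them directly.\<close>

definition smooth_step :: "real \<Rightarrow> real" where
  "smooth_step t = expinv 0 t * inverse (expinv 0 t + expinv 0 (1 + (-1) * t))"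

lemma expinv0_pos: "t > 0 \<Longrightarrow> expinv 0 t > 0" by (simp add: expinv_def)
lemma expinv0_nonneg: "expinv 0 t \<ge> 0" by (simp add: expinv_def)
lemma expinv0_eq_0: "t \<le> 0 \<Longrightarrow> expinv 0 t = 0" by (simp add: expinv_def)

lemma smooth_step_denom_pos: "expinv 0 t + expinv 0 (1 + (-1) * t) > 0"
proof (cases "t > 0")
  case True
  then show ?thesis using expinv0_pos[of t] expinv0_nonneg[of "1 + (-1) * t"] by simp
next
  case False
  then show ?thesis using expinv0_pos[of "1 + (-1) * t"] expinv0_nonneg[of t] by simp
qed

lemma smooth_step_eq_0: "t \<le> 0 \<Longrightarrow> smooth_step t = 0"
  by (simp add: smooth_step_def expinv0_eq_0)

lemma smooth_step_eq_1: "t \<ge> 1 \<Longrightarrow> smooth_step t = 1"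
proof -
  assume t: "t \<ge> 1"
  then have "expinv 0 (1 + (-1) * t) = 0" by (intro expinv0_eq_0) simp
  moreover have "expinv 0 t > 0" using t by (intro expinv0_pos) simp
  ultimately show ?thesis by (simp add: smooth_step_def)
qed

lemma elem_smooth_smooth_step:
  assumes g: "g \<in> elem_smooth"
  shows "(\<lambda>x. smooth_step (g x)) \<in> elem_smooth"
proof -
  have g1: "(\<lambda>x. 1 + (-1) * g x) \<in> elem_smooth" by (rule elem_smooth_add[OF elem_smooth_const elem_smooth_mult[OF elem_smooth_const g]])
  have den: "(\<lambda>x. expinv 0 (g x) + expinv 0 (1 + (-1) * g x)) \<in> elem_smooth" by (rule elem_smooth_add[OF elem_smooth_expinv[OF g] elem_smooth_expinv[OF g1]])
  have inv: "(\<lambda>x. inverse (expinv 0 (g x) + expinv 0 (1 + (-1) * g x))) \<in> elem_smooth"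
  proof (rule elem_smooth_inverse[OF den], intro allI)
    fix x show "expinv 0 (g x) + expinv 0 (1 + (-1) * g x) \<noteq> 0" using smooth_step_denom_pos[of "g x"] by linarith
  qed
  show ?thesis unfolding smooth_step_def by (rule elem_smooth_mult[OF elem_smooth_expinv[OF g] inv])
qed

definition ball_bump :: "'a::euclidean_space \<Rightarrow> real \<Rightarrow> 'a \<Rightarrow> real" where
  "ball_bump p r x = smooth_step (2 + (- inverse (r ^ 2)) * (\<Sum>b\<in>Basis. (x \<bullet> b + (- (p \<bullet> b))) * (x \<bullet> b + (- (p \<bullet> b)))))"

lemma sum_Basis_sq_eq_norm_sq: "(\<Sum>b\<in>Basis. (x \<bullet> b + (- (p \<bullet> b))) * (x \<bullet> b + (- (p \<bullet> b)))) = norm (x - p) ^ 2"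
proof -
  have "norm (x - p) ^ 2 = (x - p) \<bullet> (x - p)" by (simp add: power2_norm_eq_inner)
  also have "\<dots> = (\<Sum>b\<in>Basis. ((x - p) \<bullet> b) * ((x - p) \<bullet> b))" by (rule euclidean_inner)
  finally show ?thesis by (simp add: inner_diff_left)
qed

lemma elem_smooth_ball_bump: "ball_bump p r \<in> elem_smooth"
  unfolding ball_bump_def
  by (intro elem_smooth_smooth_step elem_smooth_add elem_smooth_mult elem_smooth_const elem_smooth_sum elem_smooth_inner finite_Basis)

lemma ball_bump_eq_1: "r > 0 \<Longrightarrow> norm (x - p) \<le> r \<Longrightarrow> ball_bump p r x = 1"
proof -
  assume r: "r > 0" and d: "norm (x - p) \<le> r"
  have "norm (x - p) ^ 2 \<le> r ^ 2" using d by (intro power_mono) auto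
  then have "inverse (r ^ 2) * norm (x - p) ^ 2 \<le> 1" using r by (simp add: field_simps)
  then show ?thesis unfolding ball_bump_def sum_Basis_sq_eq_norm_sq by (intro smooth_step_eq_1) simp
qed

lemma ball_bump_eq_0: "r > 0 \<Longrightarrow> norm (x - p) \<ge> 2 * r \<Longrightarrow> ball_bump p r x = 0"
proof -
  assume r: "r > 0" and d: "norm (x - p) \<ge> 2 * r"
  have "(2 * r) ^ 2 \<le> norm (x - p) ^ 2" using d r by (intro power_mono) auto
  then have "4 * r ^ 2 \<le> norm (x - p) ^ 2" by (simp add: power_mult_distrib)
  then have "2 * r ^ 2 \<le> norm (x - p) ^ 2" by (smt (verit) zero_le_power2)
  then have "2 \<le> inverse (r ^ 2) * norm (x - p) ^ 2" using r by (simp add: field_simps)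
  then show ?thesis unfolding ball_bump_def sum_Basis_sq_eq_norm_sq by (intro smooth_step_eq_0) simp
qed

lemma smooth_cutoff_exists:
  fixes K U :: "'a::euclidean_space set"
  assumes K: "compact K" and U: "open U" and KU: "K \<subseteq> U"
  obtains \<beta> W C where "\<beta> \<in> elem_smooth" "open W" "K \<subseteq> W" "\<And>x. x \<in> W \<Longrightarrow> \<beta> x = 1"
    "compact C" "C \<subseteq> U" "\<And>x. x \<notin> C \<Longrightarrow> \<beta> x = 0"
proof -
  have "\<forall>p\<in>K. \<exists>r>0. cball p (2 * r) \<subseteq> U"
  proof
    fix p assume "p \<in> K"
    then obtain e where e: "e > 0" "cball p e \<subseteq> U" using U KU open_contains_cball by blast
    then show "\<exists>r>0. cball p (2 * r) \<subseteq> U" by (intro exI[of _ "e / 2"]) auto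
  qed
  then obtain r where r: "\<And>p. p \<in> K \<Longrightarrow> r p > 0 \<and> cball p (2 * r p) \<subseteq> U" by metis
  have cov: "K \<subseteq> (\<Union>p\<in>K. ball p (r p))" using r by auto
  obtain F where F: "F \<subseteq> K" "finite F" "K \<subseteq> (\<Union>p\<in>F. ball p (r p))"
    by (rule compactE_image[OF K, of K "\<lambda>p. ball p (r p)", OF _ cov]) auto
  define \<beta> where "\<beta> = (\<lambda>x. 1 + (-1) * (\<Prod>p\<in>F. (1 + (-1) * ball_bump p (r p) x)))"
  have smooth: "\<beta> \<in> elem_smooth" unfolding \<beta>_def
    by (intro elem_smooth_add elem_smooth_mult elem_smooth_const elem_smooth_prod F elem_smooth_ball_bump)
  have "open (\<Union>p\<in>F. ball p (r p))" by auto
  moreover have one: "\<beta> x = 1" if xin: "x \<in> (\<Union>p\<in>F. ball p (r p))" for x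
  proof -
    obtain p where p: "p \<in> F" "x \<in> ball p (r p)" using xin by blast
    have "ball_bump p (r p) x = 1" using p F r[of p] by (intro ball_bump_eq_1) (auto simp: dist_norm norm_minus_commute)
    then have "(\<Prod>p\<in>F. (1 + (-1) * ball_bump p (r p) x)) = 0"
      using p F by (intro prod_zero) auto
    then show ?thesis by (simp add: \<beta>_def)
  qed
  moreover have "compact (\<Union>p\<in>F. cball p (2 * r p))" using F by auto
  moreover have "(\<Union>p\<in>F. cball p (2 * r p)) \<subseteq> U" using F r by blast
  moreover have "\<beta> x = 0" if xout: "x \<notin> (\<Union>p\<in>F. cball p (2 * r p))" for x
  proof -
    have "ball_bump p (r p) x = 0" if pF: "p \<in> F" for p
      using pF xout F r[of p] by (intro ball_bump_eq_0) (auto simp: dist_norm norm_minus_commute)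
    then have "(\<Prod>p\<in>F. (1 + (-1) * ball_bump p (r p) x)) = 1" by simp
    then show ?thesis by (simp add: \<beta>_def)
  qed
  ultimately show ?thesis using that[OF smooth _ F(3) one] by blast
qed

lemma bounded_smooth_cutoff:
  assumes f: "f \<in> elem_smooth" and C: "compact C" and z: "\<And>x. x \<notin> C \<Longrightarrow> f x = 0"
  shows "bounded_smooth (\<lambda>x. complex_of_real (f x))"
  unfolding bounded_smooth_def
proof (intro conjI allI impI)
  show "smooth_fun (\<lambda>x. complex_of_real (f x))" by (rule smooth_fun_elem_smooth[OF f])
  fix vs :: "'a list"
  obtain h where h: "h \<in> elem_smooth" "iter_deriv vs (\<lambda>x. complex_of_real (f x)) = (\<lambda>x. complex_of_real (h x))"
    using iter_deriv_elem_smooth[OF f] by blast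
  have "compact (h ` C)"
    by (rule compact_continuous_image[OF continuous_on_subset[OF continuous_on_elem_smooth[OF h(1)]] C]) simp
  then obtain B where B: "\<And>y. y \<in> C \<Longrightarrow> norm (h y) \<le> B"
    using compact_imp_bounded bounded_iff by (metis imageI)
  have "iter_deriv vs (\<lambda>x. complex_of_real (f x)) x = 0" if "x \<notin> C" for x
    using iter_deriv_eq_0_outside[OF compact_imp_closed[OF C] _ that] z by simp
  then have "norm (iter_deriv vs (\<lambda>x. complex_of_real (f x)) x) \<le> max B 0" for x
    using B[of x] h(2) by (cases "x \<in> C") auto
  then show "\<exists>B. \<forall>x. norm (iter_deriv vs (\<lambda>x. complex_of_real (f x)) x) \<le> B" by blast
qed

section \<open>Distributions with compact support\<close>

definition vanishes_on :: "(('a::euclidean_space \<Rightarrow> complex) \<Rightarrow> complex) \<Rightarrow> 'a set \<Rightarrow> bool" where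
  "vanishes_on T U \<longleftrightarrow> open U \<and>
     (\<forall>f. schwartz f \<and> compact (closure {x. f x \<noteq> 0}) \<and> closure {x. f x \<noteq> 0} \<subseteq> U \<longrightarrow> T f = 0)"

lemma dist_support_eq_vanishes_on: "dist_support T = - \<Union>{U. vanishes_on T U}"
  unfolding dist_support_def vanishes_on_def by simp

lemma vanishes_onD:
  assumes "vanishes_on T U" "schwartz f" "compact C" "C \<subseteq> U" "\<And>x. x \<notin> C \<Longrightarrow> f x = 0"
  shows "T f = 0"
proof -
  have "closure {x. f x \<noteq> 0} \<subseteq> C"
    using assms(3,5) by (intro closure_minimal compact_imp_closed) auto
  moreover from this have "compact (closure {x. f x \<noteq> 0})"
    using compact_Int_closed[OF assms(3) closed_closure, of "{x. f x \<noteq> 0}"] by (metis Int_absorb1)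
  ultimately show ?thesis using assms(1,2,4) unfolding vanishes_on_def by blast
qed

lemma tempered_cutoff_split:
  assumes T: "tempered T" and c: "bounded_smooth c" and g: "schwartz g"
  shows "T g = T (\<lambda>x. c x * g x) + T (\<lambda>x. (1 - c x) * g x)"
proof -
  have "bounded_smooth (\<lambda>x. 1 - c x)" by (rule bounded_smooth_one_minus[OF c])
  then have "T (\<lambda>x. c x * g x + (1 - c x) * g x) = T (\<lambda>x. c x * g x) + T (\<lambda>x. (1 - c x) * g x)"
    by (intro tempered_add T schwartz_mult c g)
  then show ?thesis by (simp add: algebra_simps)
qed

lemma vanishes_on_empty:
  assumes "tempered T" shows "vanishes_on T {}"
proof -
  have "f = (\<lambda>x. 0)" if "closure {x. f x \<noteq> 0} \<subseteq> {}" for f :: "'a \<Rightarrow> complex"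
    using that closure_subset[of "{x. f x \<noteq> 0}"] by auto
  then show ?thesis using tempered_zero[OF assms] by (auto simp: vanishes_on_def)
qed

lemma vanishes_on_Un:
  assumes T: "tempered T" and U1: "vanishes_on T U1" and U2: "vanishes_on T U2"
  shows "vanishes_on T (U1 \<union> U2)"
  unfolding vanishes_on_def
proof (intro conjI allI impI)
  show "open (U1 \<union> U2)" using U1 U2 by (auto simp: vanishes_on_def)
  fix f :: "'a \<Rightarrow> complex"
  assume "schwartz f \<and> compact (closure {x. f x \<noteq> 0}) \<and> closure {x. f x \<noteq> 0} \<subseteq> U1 \<union> U2"
  then have f: "schwartz f" and S: "compact (closure {x. f x \<noteq> 0})" "closure {x. f x \<noteq> 0} \<subseteq> U1 \<union> U2"
    by auto
  let ?S = "closure {x. f x \<noteq> 0}"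
  have K: "compact (?S - U2)" using S U2 by (intro compact_diff) (auto simp: vanishes_on_def)
  have U: "open U1" using U1 by (simp add: vanishes_on_def)
  have KU: "?S - U2 \<subseteq> U1" using S(2) by blast
  obtain \<beta> W C where \<beta>: "\<beta> \<in> elem_smooth" "open W" "?S - U2 \<subseteq> W" "\<And>x. x \<in> W \<Longrightarrow> \<beta> x = 1"
    "compact C" "C \<subseteq> U1" "\<And>x. x \<notin> C \<Longrightarrow> \<beta> x = 0"
    using smooth_cutoff_exists[OF K U KU] by metis
  have "T (\<lambda>x. complex_of_real (\<beta> x) * f x) = 0"
    using \<beta>(5-7) by (intro vanishes_onD[OF U1] schwartz_mult bounded_smooth_cutoff \<beta>(1) f) auto
  moreover have "T (\<lambda>x. (1 - complex_of_real (\<beta> x)) * f x) = 0"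
  proof (rule vanishes_onD[OF U2])
    show "schwartz (\<lambda>x. (1 - complex_of_real (\<beta> x)) * f x)"
      using \<beta>(5,7) by (intro schwartz_mult bounded_smooth_one_minus bounded_smooth_cutoff \<beta>(1) f)
    show "compact (?S - W)" using S \<beta>(2) by (intro compact_diff)
    show "?S - W \<subseteq> U2" using \<beta>(3) by blast
    show "(1 - complex_of_real (\<beta> x)) * f x = 0" if "x \<notin> ?S - W" for x
      using that \<beta>(4) closure_subset[of "{x. f x \<noteq> 0}"] by auto
  qed
  ultimately show "T f = 0"
    using tempered_cutoff_split[OF T bounded_smooth_cutoff[OF \<beta>(1,5,7)] f] by simp
qed

lemma dist_vanishes_off_support:
  assumes T: "tempered T" and f: "schwartz f" and C: "compact C" "C \<inter> dist_support T = {}"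
    and f0: "\<And>x. x \<notin> C \<Longrightarrow> f x = 0"
  shows "T f = 0"
proof -
  have "C \<subseteq> \<Union>{U. vanishes_on T U}"
    using C(2) unfolding dist_support_eq_vanishes_on by blast
  then obtain \<U> where \<U>: "\<U> \<subseteq> {U. vanishes_on T U}" "finite \<U>" "C \<subseteq> \<Union>\<U>"
    by (rule compactE[OF C(1)]) (auto simp: vanishes_on_def)
  have "vanishes_on T (\<Union>\<U>)"
    using \<U>(2,1)
  proof (induction \<U> rule: finite_induct)
    case (insert U \<U>)
    then show ?case using vanishes_on_Un[OF T, of U "\<Union>\<U>"] by simp
  qed (simp add: vanishes_on_empty[OF T])
  then show ?thesis by (rule vanishes_onD[OF _ f C(1) \<U>(3) f0])
qed

lemma weighted_iter_deriv_dilated_cutoff_le: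
  assumes c: "bounded_smooth c" and W0: "open W0" "cball 0 1 \<subseteq> W0" "\<And>x. x \<in> W0 \<Longrightarrow> c x = 0"
    and f: "schwartz f" and vs: "set vs \<subseteq> Basis" and R: "R \<ge> 1"
  shows "(1 + norm y) ^ n * norm (iter_deriv vs (\<lambda>x. c (inverse R *\<^sub>R x) * f x) y)
           \<le> (\<Sum>p\<leftarrow>leibniz_split vs. deriv_bound c (fst p) * schwartz_seminorm (Suc n) (snd p) f) / (1 + R)"
    (is "?lhs \<le> ?K / _")
proof (cases "norm y < R")
  case True
  have "?K \<ge> 0"
    using leibniz_split_Basis[OF vs]
    by (fastforce intro!: sum_list_nonneg mult_nonneg_nonneg deriv_bound_nonneg[OF c]
        schwartz_seminorm_nonneg[OF f])
  moreover have "iter_deriv vs (\<lambda>x. c (inverse R *\<^sub>R x) * f x) y = iter_deriv vs (\<lambda>x. 0) y"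
  proof (rule iter_deriv_local[of "(\<lambda>x. inverse R *\<^sub>R x) -` W0"])
    show "open ((\<lambda>x. inverse R *\<^sub>R x) -` W0)" by (intro open_vimage W0(1) continuous_intros)
    show "y \<in> (\<lambda>x. inverse R *\<^sub>R x) -` W0"
      using True R W0(2) by (auto simp: field_simps)
  qed (use W0(3) in auto)
  ultimately show ?thesis using R by (simp add: iter_deriv_zero)
next
  case False
  have cR: "smooth_fun (\<lambda>x. c (inverse R *\<^sub>R x))"
    using smooth_fun_affine[OF bounded_smooth_imp_smooth_fun[OF c], of 0] by simp
  have "\<bar>inverse R\<bar> \<le> 1" using R by (simp add: inverse_le_1_iff)
  then have "(1 + norm y) ^ Suc n * norm (iter_deriv vs (\<lambda>x. c (inverse R *\<^sub>R x) * f x) y) \<le> ?K"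
    using norm_iter_deriv_affine_le[OF c, of "inverse R" _ 0]
    by (intro weighted_iter_deriv_mult_le[OF cR f vs]) simp_all
  moreover have "(1 + R) * ?lhs \<le> (1 + norm y) ^ Suc n * norm (iter_deriv vs (\<lambda>x. c (inverse R *\<^sub>R x) * f x) y)"
    using False by (simp add: mult_right_mono mult.assoc)
  ultimately show ?thesis using R by (simp add: field_simps)
qed

lemma dist_eq_dilated_cutoff:
  assumes T: "tempered T" and f: "schwartz f"
    and W: "open W" "dist_support T \<subseteq> W" "\<And>x. x \<in> W \<Longrightarrow> f x = 0"
    and \<beta>: "\<beta> \<in> elem_smooth" "compact C" "\<And>x. x \<notin> C \<Longrightarrow> \<beta> x = 0" and R: "R \<ge> 1"
  shows "T f = T (\<lambda>x. (1 - complex_of_real (\<beta> (inverse R *\<^sub>R x))) * f x)"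
proof -
  have bR: "bounded_smooth (\<lambda>x. complex_of_real (\<beta> (inverse R *\<^sub>R x)))"
    using bounded_smooth_affine[OF bounded_smooth_cutoff[OF \<beta>], of "inverse R" 0] R
    by (simp add: inverse_le_1_iff)
  have "T (\<lambda>x. complex_of_real (\<beta> (inverse R *\<^sub>R x)) * f x) = 0"
  proof (rule dist_vanishes_off_support[OF T schwartz_mult[OF bR f]])
    show "compact ((\<lambda>y. R *\<^sub>R y) ` C - W)"
      by (intro compact_diff compact_continuous_image \<beta>(2) continuous_intros W(1))
    show "((\<lambda>y. R *\<^sub>R y) ` C - W) \<inter> dist_support T = {}" using W(2) by blast
    show "complex_of_real (\<beta> (inverse R *\<^sub>R x)) * f x = 0" if "x \<notin> (\<lambda>y. R *\<^sub>R y) ` C - W" for x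
    proof (cases "x \<in> W")
      case False
      then have "inverse R *\<^sub>R x \<notin> C"
        using that R by (auto simp: image_iff intro: bexI[of _ "inverse R *\<^sub>R x"])
      then show ?thesis by (simp add: \<beta>(3))
    qed (simp add: W(3))
  qed
  then show ?thesis using tempered_cutoff_split[OF T bR f] by simp
qed

text \<open>If f vanishes near the support of T, the dilated cutoffs split f into a part supported away from
  the support of T and a part tending to zero in the Schwartz topology.\<close>

lemma dist_vanishes_near_support:
  assumes T: "tempered T" and f: "schwartz f"
    and W: "open W" "dist_support T \<subseteq> W" "\<And>x. x \<in> W \<Longrightarrow> f x = 0"
  shows "T f = 0"
proof -
  obtain \<beta> W0 C0 where \<beta>: "\<beta> \<in> elem_smooth" "open W0" "cball (0::'a) 1 \<subseteq> W0" "\<And>x. x \<in> W0 \<Longrightarrow> \<beta> x = 1"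
    "compact C0" "\<And>x. x \<notin> C0 \<Longrightarrow> \<beta> x = 0"
    by (rule smooth_cutoff_exists[of "cball 0 1" UNIV]) auto
  define c where "c = (\<lambda>x. 1 - complex_of_real (\<beta> x))"
  have c: "bounded_smooth c"
    unfolding c_def by (rule bounded_smooth_one_minus[OF bounded_smooth_cutoff[OF \<beta>(1,5,6)]])
  define K where "K n vs = (\<Sum>p\<leftarrow>leibniz_split vs. deriv_bound c (fst p) * schwartz_seminorm (Suc n) (snd p) f)"
    for n vs
  have "((\<lambda>R. T (\<lambda>x. c (inverse R *\<^sub>R x) * f x)) \<longlongrightarrow> 0) at_top"
  proof (rule tempered_tendsto_zero[OF T])
    show sch: "eventually (\<lambda>R. schwartz (\<lambda>x. c (inverse R *\<^sub>R x) * f x)) at_top"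
    proof (rule eventually_mono[OF eventually_ge_at_top[of 1]])
      fix R :: real assume "1 \<le> R"
      then show "schwartz (\<lambda>x. c (inverse R *\<^sub>R x) * f x)"
        using bounded_smooth_affine[OF c, of "inverse R" 0]
        by (intro schwartz_mult f) (simp_all add: inverse_le_1_iff)
    qed
    fix n :: nat and vs :: "'a list" assume vs: "set vs \<subseteq> Basis"
    show "((\<lambda>R. schwartz_seminorm n vs (\<lambda>x. c (inverse R *\<^sub>R x) * f x)) \<longlongrightarrow> 0) at_top"
    proof (rule schwartz_seminorm_tendsto_0I[OF sch vs])
      show "eventually (\<lambda>R. \<forall>y. (1 + norm y) ^ n * norm (iter_deriv vs (\<lambda>x. c (inverse R *\<^sub>R x) * f x) y)
               \<le> K n vs / (1 + R)) at_top"
        using eventually_ge_at_top[of 1] unfolding K_def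
        by eventually_elim (intro allI weighted_iter_deriv_dilated_cutoff_le[OF c \<beta>(2,3)] f vs,
            auto simp: c_def \<beta>(4))
      show "((\<lambda>R. K n vs / (1 + R)) \<longlongrightarrow> 0) at_top"
        by (intro tendsto_divide_0[OF tendsto_const] filterlim_at_top_imp_at_infinity
            filterlim_tendsto_add_at_top[OF tendsto_const filterlim_ident])
    qed
  qed
  moreover have "eventually (\<lambda>R. T (\<lambda>x. c (inverse R *\<^sub>R x) * f x) = T f) at_top"
    using eventually_ge_at_top[of 1]
    by eventually_elim (simp add: c_def dist_eq_dilated_cutoff[OF T f W \<beta>(1,5,6)])
  ultimately have "((\<lambda>R::real. T f) \<longlongrightarrow> 0) at_top"
    by (rule Lim_transform_eventually)
  then show ?thesis by (simp add: tendsto_const_iff)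
qed

lemma compactly_supported_cutoff:
  assumes T: "tempered T" and K: "compactly_supported T"
  obtains ch R where "bounded_smooth ch" "\<And>y. R < norm y \<Longrightarrow> ch y = 0"
    "\<And>g. schwartz g \<Longrightarrow> T g = T (\<lambda>y. ch y * g y)"
proof -
  have "compact (dist_support T)" using K by (simp add: compactly_supported_def)
  then obtain \<beta> W C where \<beta>: "\<beta> \<in> elem_smooth" "open W" "dist_support T \<subseteq> W" "\<And>x. x \<in> W \<Longrightarrow> \<beta> x = 1"
    "compact C" "\<And>x. x \<notin> C \<Longrightarrow> \<beta> x = 0"
    by (rule smooth_cutoff_exists[of _ UNIV]) auto
  have b: "bounded_smooth (\<lambda>x. complex_of_real (\<beta> x))"
    by (rule bounded_smooth_cutoff[OF \<beta>(1,5,6)])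
  obtain R where R: "\<And>x. x \<in> C \<Longrightarrow> norm x \<le> R"
    using compact_imp_bounded[OF \<beta>(5)] bounded_iff by blast
  have "complex_of_real (\<beta> y) = 0" if "R < norm y" for y
    using R[of y] that \<beta>(6) by force
  moreover have "T g = T (\<lambda>y. complex_of_real (\<beta> y) * g y)" if g: "schwartz g" for g
  proof -
    have "T (\<lambda>y. (1 - complex_of_real (\<beta> y)) * g y) = 0"
      by (rule dist_vanishes_near_support[OF T _ \<beta>(2,3)])
         (use \<beta>(4) in \<open>simp_all add: schwartz_mult bounded_smooth_one_minus[OF b] g\<close>)
    then show ?thesis using tempered_cutoff_split[OF T b g] by simp
  qed
  ultimately show ?thesis using that[OF b] by blast
qed

section \<open>Convolution with a compactly supported distribution\<close>

lemma weighted_iter_deriv_affine_shift_le: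
  assumes h: "schwartz h" and s: "\<bar>s\<bar> = 1" and vs: "set vs \<subseteq> Basis"
  shows "(1 + norm x) ^ n * ((1 + norm y) ^ m * norm (iter_deriv vs (\<lambda>y. h (x + s *\<^sub>R y)) y))
           \<le> (1 + norm y) ^ (m + n) * schwartz_seminorm n vs h"
proof -
  have "(1 + norm x) ^ n \<le> (1 + norm (x + s *\<^sub>R y)) ^ n * (1 + norm y) ^ n"
    using weight_translate_power_le[of x n "s *\<^sub>R y"] s by (simp add: add.commute)
  then have "(1 + norm x) ^ n * ((1 + norm y) ^ m * norm (iter_deriv vs h (x + s *\<^sub>R y)))
      \<le> ((1 + norm (x + s *\<^sub>R y)) ^ n * (1 + norm y) ^ n) * ((1 + norm y) ^ m * norm (iter_deriv vs h (x + s *\<^sub>R y)))"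
    by (rule mult_right_mono) simp
  also have "\<dots> = (1 + norm y) ^ (m + n) * ((1 + norm (x + s *\<^sub>R y)) ^ n * norm (iter_deriv vs h (x + s *\<^sub>R y)))"
    by (simp add: power_add ac_simps)
  also have "\<dots> \<le> (1 + norm y) ^ (m + n) * schwartz_seminorm n vs h"
    by (intro mult_left_mono schwartz_seminorm_upper h vs) simp
  finally show ?thesis
    using s by (simp add: iter_deriv_affine[OF schwartz_imp_smooth_fun[OF h] vs] power_abs)
qed

lemma weighted_iter_deriv_localized_le:
  assumes ch: "bounded_smooth ch" and ch0: "\<And>y. R < norm y \<Longrightarrow> ch y = 0" and R: "R \<ge> 0"
    and h: "schwartz h" and s: "\<bar>s\<bar> = 1" and us: "set us \<subseteq> Basis"
    and M: "n \<le> M" "length us \<le> M"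
  shows "(1 + norm x) ^ n * ((1 + norm y) ^ m * norm (iter_deriv us (\<lambda>y. ch y * h (x + s *\<^sub>R y)) y))
     \<le> (\<Sum>p\<leftarrow>leibniz_split us. deriv_bound ch (fst p)) * (1 + R) ^ (m + n) * seminorm_sum M h"
    (is "?lhs \<le> ?B * _ * _")
proof (cases "norm y \<le> R")
  case True
  have hx: "smooth_fun (\<lambda>y. h (x + s *\<^sub>R y))"
    by (rule smooth_fun_affine[OF schwartz_imp_smooth_fun[OF h]])
  have p: "set (fst p) \<subseteq> Basis" "set (snd p) \<subseteq> Basis" "length (snd p) \<le> M"
    if "p \<in> set (leibniz_split us)" for p
    using leibniz_split_subset[OF that] us M by auto
  let ?w = "(1 + norm x) ^ n * (1 + norm y) ^ m"
  have "?lhs = ?w * norm (iter_deriv us (\<lambda>y. ch y * h (x + s *\<^sub>R y)) y)"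
    by (simp add: mult.assoc)
  also have "\<dots> \<le> ?w * (\<Sum>p\<leftarrow>leibniz_split us. deriv_bound ch (fst p) *
                   norm (iter_deriv (snd p) (\<lambda>y. h (x + s *\<^sub>R y)) y))"
    by (intro mult_left_mono norm_iter_deriv_mult_le[OF bounded_smooth_imp_smooth_fun[OF ch] hx us
        norm_iter_deriv_le_deriv_bound[OF ch]]) simp_all
  also have "\<dots> = (\<Sum>p\<leftarrow>leibniz_split us. deriv_bound ch (fst p) *
       ((1 + norm x) ^ n * ((1 + norm y) ^ m * norm (iter_deriv (snd p) (\<lambda>y. h (x + s *\<^sub>R y)) y))))"
    unfolding sum_list_const_mult[symmetric] by (simp add: ac_simps)
  also have "\<dots> \<le> (\<Sum>p\<leftarrow>leibniz_split us. deriv_bound ch (fst p) * ((1 + R) ^ (m + n) * seminorm_sum M h))"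
  proof (intro sum_list_mono mult_left_mono deriv_bound_nonneg[OF ch] p)
    fix p assume "p \<in> set (leibniz_split us)"
    note p = p[OF this]
    have "(1 + norm y) ^ (m + n) * schwartz_seminorm n (snd p) h \<le> (1 + R) ^ (m + n) * seminorm_sum M h"
      using True
      by (intro mult_mono power_mono schwartz_seminorm_le_seminorm_sum h p M(1)
          schwartz_seminorm_nonneg seminorm_sum_nonneg) (use R in simp_all)
    then show "(1 + norm x) ^ n * ((1 + norm y) ^ m * norm (iter_deriv (snd p) (\<lambda>y. h (x + s *\<^sub>R y)) y))
        \<le> (1 + R) ^ (m + n) * seminorm_sum M h"
      using weighted_iter_deriv_affine_shift_le[OF h s p(2), of x n y m] by linarith
  qed
  also have "\<dots> = ?B * (1 + R) ^ (m + n) * seminorm_sum M h"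
    by (simp add: sum_list_mult_const)
  finally show ?thesis .
next
  case False
  have "iter_deriv us (\<lambda>y. ch y * h (x + s *\<^sub>R y)) y = 0"
    by (rule iter_deriv_eq_0_outside[of "cball 0 R"]) (use False ch0 in auto)
  moreover have "?B \<ge> 0"
    using leibniz_split_Basis[OF us] by (fastforce intro!: sum_list_nonneg deriv_bound_nonneg[OF ch])
  ultimately show ?thesis using R seminorm_sum_nonneg[OF h] by simp
qed

lemma schwartz_seminorm_scaled_le:
  assumes "w > 0" "\<And>y. w * ((1 + norm y) ^ m * norm (iter_deriv vs f y)) \<le> B"
  shows "w * schwartz_seminorm m vs f \<le> B"
proof -
  have "schwartz_seminorm m vs f \<le> B / w"
    using assms by (intro schwartz_seminorm_least) (simp add: field_simps mult.commute)
  then show ?thesis using assms(1) by (simp add: field_simps mult.commute)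
qed

lemma schwartz_seminorm_mono:
  assumes "schwartz f" "set vs \<subseteq> Basis" "m \<le> n"
  shows "schwartz_seminorm m vs f \<le> schwartz_seminorm n vs f"
proof (rule schwartz_seminorm_least)
  fix x
  have "(1 + norm x) ^ m * norm (iter_deriv vs f x) \<le> (1 + norm x) ^ n * norm (iter_deriv vs f x)"
    using assms(3) by (intro mult_right_mono power_increasing) auto
  also have "\<dots> \<le> schwartz_seminorm n vs f" by (rule schwartz_seminorm_upper[OF assms(1,2)])
  finally show "(1 + norm x) ^ m * norm (iter_deriv vs f x) \<le> schwartz_seminorm n vs f" .
qed

text \<open>The central estimate: since a compactly supported distribution only sees a fixed ball,
  pairing it with far translates of a Schwartz function gives rapidly decaying values.\<close>

lemma shifted_pairing_decay:
  fixes T :: "('a::euclidean_space \<Rightarrow> complex) \<Rightarrow> complex"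
  assumes T: "tempered T" and K: "compactly_supported T"
  obtains Kc M where "Kc \<ge> 0" "\<And>h x s. schwartz h \<Longrightarrow> \<bar>s\<bar> = 1 \<Longrightarrow>
      (1 + norm x) ^ n * norm (T (\<lambda>y. h (x + s *\<^sub>R y))) \<le> Kc * seminorm_sum M h"
proof -
  obtain ch R0 where ch: "bounded_smooth ch" "\<And>y. R0 < norm y \<Longrightarrow> ch y = 0"
    "\<And>g. schwartz g \<Longrightarrow> T g = T (\<lambda>y. ch y * g y)"
    using compactly_supported_cutoff[OF T K] by metis
  obtain C N where C: "C \<ge> 0" and CN: "\<And>f. schwartz f \<Longrightarrow> norm (T f) \<le> C * seminorm_sum N f"
    using tempered_seminorm_bound[OF T] by metis
  define R where "R = max R0 0"
  define M where "M = max n N"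
  define L where "L q = (\<Sum>p\<leftarrow>leibniz_split (snd q). deriv_bound ch (fst p)) * (1 + R) ^ (fst q + n)"
    for q :: "nat \<times> 'a list"
  have ch0: "ch y = 0" if "R < norm y" for y using that ch(2) by (simp add: R_def)
  have R: "R \<ge> 0" by (simp add: R_def)
  have L0: "L q \<ge> 0" if "q \<in> seminorm_index N" for q
  proof -
    have "set (snd q) \<subseteq> Basis" using seminorm_indexD[OF that] by blast
    from leibniz_split_Basis[OF this] have "0 \<le> (\<Sum>p\<leftarrow>leibniz_split (snd q). deriv_bound ch (fst p))"
      by (fastforce intro!: sum_list_nonneg deriv_bound_nonneg[OF ch(1)])
    then show ?thesis unfolding L_def R_def by simp
  qed
  have "(1 + norm x) ^ n * norm (T (\<lambda>y. h (x + s *\<^sub>R y))) \<le> (C * (\<Sum>q\<in>seminorm_index N. L q)) * seminorm_sum M h"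
    if h: "schwartz h" and s: "\<bar>s\<bar> = 1" for h x s
  proof -
    let ?F = "\<lambda>y. ch y * h (x + s *\<^sub>R y)"
    have hx: "schwartz (\<lambda>y. h (x + s *\<^sub>R y))" by (rule schwartz_affine[OF h s])
    then have "norm (T (\<lambda>y. h (x + s *\<^sub>R y))) \<le> C * seminorm_sum N ?F"
      using CN[OF schwartz_mult[OF ch(1) hx]] ch(3) by simp
    then have "(1 + norm x) ^ n * norm (T (\<lambda>y. h (x + s *\<^sub>R y))) \<le> (1 + norm x) ^ n * (C * seminorm_sum N ?F)"
      by (rule mult_left_mono) simp
    also have "\<dots> = C * (\<Sum>q\<in>seminorm_index N. (1 + norm x) ^ n * schwartz_seminorm (fst q) (snd q) ?F)"
      by (simp add: seminorm_sum_eq sum_distrib_left mult.left_commute)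
    also have "\<dots> \<le> C * (\<Sum>q\<in>seminorm_index N. L q * seminorm_sum M h)"
    proof (intro mult_left_mono sum_mono C schwartz_seminorm_scaled_le)
      fix q :: "nat \<times> 'a list" and y :: 'a assume "q \<in> seminorm_index N"
      then have "set (snd q) \<subseteq> Basis" "n \<le> M" "length (snd q) \<le> M"
        by (auto simp: M_def dest: seminorm_indexD)
      from weighted_iter_deriv_localized_le[OF ch(1) ch0 R h s this, of x y "fst q"]
      show "(1 + norm x) ^ n * ((1 + norm y) ^ fst q * norm (iter_deriv (snd q) ?F y)) \<le> L q * seminorm_sum M h"
        unfolding L_def by (simp add: mult.assoc)
    qed (simp add: add_pos_nonneg)
    finally show ?thesis by (simp add: sum_distrib_right mult.assoc)
  qed
  moreover have "C * (\<Sum>q\<in>seminorm_index N. L q) \<ge> 0" using C L0 by (simp add: sum_nonneg)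
  ultimately show ?thesis using that by blast
qed

lemma schwartz_shifted_pairing:
  assumes T: "tempered T" and K: "compactly_supported T" and g: "schwartz g" and s: "\<bar>s\<bar> = 1"
  shows "schwartz (shifted_pairing T s g)"
  unfolding schwartz_def
proof (intro conjI allI impI smooth_fun_shifted_pairing T g s)
  fix vs :: "'a list" and n :: nat assume vs: "set vs \<subseteq> Basis"
  obtain Kc M where "\<And>h x. schwartz h \<Longrightarrow>
      (1 + norm x) ^ n * norm (T (\<lambda>y. h (x + s *\<^sub>R y))) \<le> Kc * seminorm_sum M h"
    using shifted_pairing_decay[OF T K] s by metis
  then show "\<exists>C. \<forall>x. (1 + norm x) ^ n * norm (iter_deriv vs (shifted_pairing T s g) x) \<le> C"
    unfolding iter_deriv_shifted_pairing[OF T g s vs] shifted_pairing_def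
    using schwartz_iter_deriv[OF g vs] by blast
qed

lemma seminorm_sum_shifted_pairing_le:
  fixes T :: "('a::euclidean_space \<Rightarrow> complex) \<Rightarrow> complex"
  assumes T: "tempered T" and K: "compactly_supported T" and s: "\<bar>s\<bar> = 1"
  obtains C M where "C \<ge> 0" "\<And>g. schwartz g \<Longrightarrow> seminorm_sum N (shifted_pairing T s g) \<le> C * seminorm_sum M g"
proof -
  obtain Kc M where Kc: "Kc \<ge> 0" and decay: "\<And>h x. schwartz h \<Longrightarrow>
      (1 + norm x) ^ N * norm (T (\<lambda>y. h (x + s *\<^sub>R y))) \<le> Kc * seminorm_sum M h"
    using shifted_pairing_decay[OF T K] s by metis
  define I where "I = (\<lambda>N. real (card (seminorm_index N :: (nat \<times> 'a list) set)))"
  have "seminorm_sum N (shifted_pairing T s g) \<le> (I N * (Kc * I M)) * seminorm_sum (M + N) g"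
    if g: "schwartz g" for g
  proof -
    have qb: "schwartz_seminorm (fst q) (snd q) (shifted_pairing T s g) \<le> Kc * I M * seminorm_sum (M + N) g"
      if q: "q \<in> seminorm_index N" for q
    proof -
      have ws: "set (snd q) \<subseteq> Basis" "fst q \<le> N" "length (snd q) \<le> N" using seminorm_indexD[OF q] by auto
      have "schwartz_seminorm (fst q) (snd q) (shifted_pairing T s g)
              \<le> schwartz_seminorm N (snd q) (shifted_pairing T s g)"
        by (intro schwartz_seminorm_mono schwartz_shifted_pairing T K g s ws)
      also have "\<dots> \<le> Kc * seminorm_sum M (iter_deriv (snd q) g)"
      proof (rule schwartz_seminorm_least)
        fix x
        show "(1 + norm x) ^ N * norm (iter_deriv (snd q) (shifted_pairing T s g) x)
                \<le> Kc * seminorm_sum M (iter_deriv (snd q) g)"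
          using decay[OF schwartz_iter_deriv[OF g ws(1)], of x]
          by (simp add: iter_deriv_shifted_pairing[OF T g s ws(1)] shifted_pairing_def)
      qed
      also have "\<dots> \<le> Kc * (I M * seminorm_sum (M + length (snd q)) g)"
        unfolding I_def by (intro mult_left_mono seminorm_sum_iter_deriv_le g ws(1) Kc)
      also have "\<dots> \<le> Kc * (I M * seminorm_sum (M + N) g)"
        unfolding I_def using ws(3) by (intro mult_left_mono seminorm_sum_mono g) (auto simp: Kc)
      finally show ?thesis by (simp add: mult.assoc)
    qed
    then have "seminorm_sum N (shifted_pairing T s g) \<le> (\<Sum>q\<in>(seminorm_index N :: (nat \<times> 'a list) set). Kc * I M * seminorm_sum (M + N) g)"
      unfolding seminorm_sum_eq[of N] by (intro sum_mono qb)
    then show ?thesis by (simp add: I_def mult.assoc)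
  qed
  moreover have "I N * (Kc * I M) \<ge> 0" using Kc by (simp add: I_def)
  ultimately show ?thesis using that by blast
qed

lemma shifted_pairing_add:
  assumes T: "tempered T" and f: "schwartz f" and g: "schwartz g" and s: "\<bar>s\<bar> = 1"
  shows "shifted_pairing T s (\<lambda>x. f x + g x) = (\<lambda>x. shifted_pairing T s f x + shifted_pairing T s g x)"
  unfolding shifted_pairing_def by (rule ext, rule tempered_add[OF T schwartz_affine[OF f s] schwartz_affine[OF g s]])

lemma shifted_pairing_cmult:
  assumes T: "tempered T" and f: "schwartz f" and s: "\<bar>s\<bar> = 1"
  shows "shifted_pairing T s (\<lambda>x. c * f x) = (\<lambda>x. c * shifted_pairing T s f x)"
  unfolding shifted_pairing_def by (rule ext, rule tempered_cmult[OF T schwartz_affine[OF f s]])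

lemma dconv_eq_shifted_pairing: "dconv \<psi> \<phi> f = \<psi> (shifted_pairing \<phi> 1 f)"
  by (simp add: dconv_def shifted_pairing_def[abs_def])

lemma dconv_fun_dconv: "dconv_fun (dconv \<psi> \<phi>) f = dconv_fun \<psi> (shifted_pairing \<phi> (-1) f)"
  by (auto simp: dconv_fun_def dconv_def shifted_pairing_def algebra_simps)

lemma tempered_dconv:
  fixes \<psi> \<phi> :: "('a::euclidean_space \<Rightarrow> complex) \<Rightarrow> complex"
  assumes \<psi>: "tempered \<psi>" and \<phi>: "tempered \<phi>" and K: "compactly_supported \<phi>"
  shows "tempered (dconv \<psi> \<phi>)"
proof -
  have one: "\<bar>1::real\<bar> = 1" by simp
  have sF: "schwartz (shifted_pairing \<phi> 1 f)" if "schwartz f" for f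
    by (rule schwartz_shifted_pairing[OF \<phi> K that one])
  obtain C N where C: "C \<ge> 0" and CN: "\<And>f. schwartz f \<Longrightarrow> norm (\<psi> f) \<le> C * seminorm_sum N f"
    using tempered_seminorm_bound[OF \<psi>] by metis
  obtain D M where DM: "\<And>f. schwartz f \<Longrightarrow> seminorm_sum N (shifted_pairing \<phi> 1 f) \<le> D * seminorm_sum M f"
    using seminorm_sum_shifted_pairing_le[OF \<phi> K one] by metis
  have "norm (dconv \<psi> \<phi> f) \<le> (C * D) * seminorm_sum M f" if f: "schwartz f" for f
    unfolding dconv_eq_shifted_pairing
    using CN[OF sF[OF f]] mult_left_mono[OF DM[OF f] C] by (simp add: mult.assoc)
  then have "\<exists>C N. \<forall>f. schwartz f \<longrightarrow> norm (dconv \<psi> \<phi> f) \<le> C *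
      (\<Sum>(n, vs)\<in>{..N} \<times> {vs. set vs \<subseteq> Basis \<and> length vs \<le> N}. schwartz_seminorm n vs f)"
    unfolding seminorm_sum_def seminorm_index_def by blast
  moreover have "dconv \<psi> \<phi> (\<lambda>x. f x + g x) = dconv \<psi> \<phi> f + dconv \<psi> \<phi> g"
    if "schwartz f" "schwartz g" for f g
    unfolding dconv_eq_shifted_pairing shifted_pairing_add[OF \<phi> that one]
    by (rule tempered_add[OF \<psi> sF sF]) (use that in auto)
  moreover have "dconv \<psi> \<phi> (\<lambda>x. c * f x) = c * dconv \<psi> \<phi> f" if "schwartz f" for f c
    unfolding dconv_eq_shifted_pairing shifted_pairing_cmult[OF \<phi> that one]
    by (rule tempered_cmult[OF \<psi> sF[OF that]])
  ultimately show ?thesis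
    unfolding tempered_def by blast
qed

theorem proposition5p9:
  fixes \<psi> \<phi> :: "('a::euclidean_space \<Rightarrow> complex) \<Rightarrow> complex"
  assumes "tempered \<psi>" and "tempered \<phi>" and "compactly_supported \<phi>"
  shows "(weakly_ap_dist \<psi> \<longrightarrow> weakly_ap_dist (dconv \<psi> \<phi>)) \<and>
         (strongly_ap_dist \<psi> \<longrightarrow> strongly_ap_dist (dconv \<psi> \<phi>)) \<and>
         (null_weakly_ap_dist \<psi> \<longrightarrow> null_weakly_ap_dist (dconv \<psi> \<phi>))"
proof -
  have "tempered (dconv \<psi> \<phi>)" by (rule tempered_dconv[OF assms])
  moreover have "schwartz (shifted_pairing \<phi> (-1) f)" if "schwartz f" for f
    by (rule schwartz_shifted_pairing[OF assms(2,3) that]) simp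
  ultimately show ?thesis
    unfolding weakly_ap_dist_def strongly_ap_dist_def null_weakly_ap_dist_def dconv_fun_dconv
    by blast
qed

end
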